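(* Let $P=\{p_1,\dots,p_n\}\subset\mathbb{R}^2$ be in convex position, labeled counter-clockwise (indices mod $n$). The affine map $d\mapsto a=(a_1,\dots,a_n)$ given by $$a_i=-\frac{d_{i-1,i+1}}{\det(p_{i-1},p_i,p_{i+1})}+\det(p_{i-1},p_i,p_{i+1})$$ sends, for every triangulation $T$ of $P$, the vertex of $Y$ corresponding to $T$ (the point of $Y$ with $d_{ij}=0$ for all edges $ij$ of $T$) to $(\operatorname{Area}_T(p_1),\dots,\operatorname{Area}_T(p_n))$, the vertex of the secondary polytope of $P$ corresponding to $T$. Consequently it maps the maximal bounded face of $Y$ (the polytope of pointed pseudo-triangulations) onto the secondary polytope of $P$, which is an associahedron.
   Context: $\det(q_0,q_1,q_2)$ is the determinant of the $3\times3$ matrix with columns $(q_0,1),(q_1,1),(q_2,1)$. $\operatorname{Area}_T(p_i)=\sum_{l=1}^{t-1}\det(p_i,p_{j_l},p_{j_{l+1}})$ with $p_{j_1}=p_{i+1},\dots,p_{j_t}=p_{i-1}$ the neighbors of $p_i$ in $T$ in angular order. The secondary polytope of $P$ is the convex hull of the vectors $(\operatorname{Area}_T(p_1),\dots,\operatorname{Area}_T(p_n))$ over all triangulations $T$. $Y\subset\mathbb{R}^{\binom n2}$ (coordinates $d_{ij}=d_{ji}$) is defined by $d_{ij}\le0$ for all pairs and, for every four distinct indices, $\sum w_{\alpha\beta}d_{\alpha\beta}=1$ over the six pairs of the quadruple, with $w_{\alpha\beta}=1/(\det(p_\alpha,p_\beta,p_\gamma)\det(p_\alpha,p_\beta,p_\delta))$,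 $\{\gamma,\delta\}$ the other two indices; its maximal bounded face is obtained by setting $d_{i,i+1}=0$ for all $i$. *)

theory Defs
  imports "HOL-Analysis.Analysis"
begin

text \<open>Points of the plane are pairs of reals. Indices are 0..n-1 (the paper uses 1..n),
  taken modulo n.\<close>

text \<open>det(q0,q1,q2): determinant of the 3x3 matrix with columns (q0,1),(q1,1),(q2,1),
  expanded.\<close>
definition det3 :: "real \<times> real \<Rightarrow> real \<times> real \<Rightarrow> real \<times> real \<Rightarrow> real" where
  "det3 q0 q1 q2 =
     fst q0 * snd q1 + fst q1 * snd q2 + fst q2 * snd q0
   - fst q0 * snd q2 - fst q1 * snd q0 - fst q2 * snd q1"

definition convex_ccw :: "nat \<Rightarrow> (nat \<Rightarrow> real \<times> real) \<Rightarrow> bool" where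
  "convex_ccw n p \<longleftrightarrow> 3 \<le> n \<and>
     (\<forall>i j k. i < j \<and> j < k \<and> k < n \<longrightarrow> det3 (p i) (p j) (p k) > 0)"

definition segs :: "nat \<Rightarrow> nat set set" where
  "segs n = {{i, j} | i j. i < j \<and> j < n}"

text \<open>Two segments {a,b}, {c,e} (a<b, c<e) cross in the interior iff their endpoints
  interleave in the cyclic (= convex) order.\<close>
definition crossing :: "nat set \<Rightarrow> nat set \<Rightarrow> bool" where
  "crossing s t \<longleftrightarrow> (\<exists>a b c e. s = {a, b} \<and> t = {c, e} \<and> a < c \<and> c < b \<and> b < e)"

definition noncrossing :: "nat set \<Rightarrow> nat set \<Rightarrow> bool" where
  "noncrossing s t \<longleftrightarrow> \<not> crossing s t \<and> \<not> crossing t s"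

text \<open>A convex_triangulation of a point set in convex position, given by its edge set:
  a maximal set of pairwise non-crossing segments (it then contains all hull edges).
  We also state the hull edges explicitly.\<close>
definition convex_triangulation :: "nat \<Rightarrow> nat set set \<Rightarrow> bool" where
  "convex_triangulation n T \<longleftrightarrow> T \<subseteq> segs n \<and>
     (\<forall>i<n. {i, Suc i mod n} \<in> T) \<and>
     (\<forall>s\<in>T. \<forall>t\<in>T. noncrossing s t) \<and>
     (\<forall>s\<in>segs n. s \<notin> T \<longrightarrow> (\<exists>t\<in>T. \<not> noncrossing s t))"

text \<open>Neighbours of p_i in T in angular order, from p_{i+1} to p_{i-1}: for points in convex
  position labeled counter-clockwise this is the cyclic index order, encoded here by the
  sorted offsets k (neighbour (i+k) mod n).\<close>
definition nbr_offsets :: "nat \<Rightarrow> nat set set \<Rightarrow> nat \<Rightarrow> nat list" where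
  "nbr_offsets n T i = sorted_list_of_set {k. 0 < k \<and> k < n \<and> {i, (i + k) mod n} \<in> T}"

definition AreaT :: "nat \<Rightarrow> (nat \<Rightarrow> real \<times> real) \<Rightarrow> nat set set \<Rightarrow> nat \<Rightarrow> real" where
  "AreaT n p T i = (let ks = nbr_offsets n T i in
     (\<Sum>l < length ks - 1. det3 (p i) (p ((i + ks ! l) mod n)) (p ((i + ks ! Suc l) mod n))))"

definition area_vec :: "nat \<Rightarrow> (nat \<Rightarrow> real \<times> real) \<Rightarrow> nat set set \<Rightarrow> nat \<Rightarrow> real" where
  "area_vec n p T = (\<lambda>i. if i < n then AreaT n p T i else 0)"

definition cvx_comb_hull :: "(nat \<Rightarrow> real) set \<Rightarrow> (nat \<Rightarrow> real) set" where
  "cvx_comb_hull S = {x. \<exists>(m::nat) c v. (\<forall>l<m. 0 \<le> c l \<and> v l \<in> S) \<and> (\<Sum>l<m. c l) = 1 \<and>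
                          x = (\<lambda>j. \<Sum>l<m. c l * v l j)}"

definition secondary_polytope :: "nat \<Rightarrow> (nat \<Rightarrow> real \<times> real) \<Rightarrow> (nat \<Rightarrow> real) set" where
  "secondary_polytope n p = cvx_comb_hull {area_vec n p T | T. convex_triangulation n T}"

definition wgt :: "(nat \<Rightarrow> real \<times> real) \<Rightarrow> nat \<Rightarrow> nat \<Rightarrow> nat \<Rightarrow> nat \<Rightarrow> real" where
  "wgt p a b c e = 1 / (det3 (p a) (p b) (p c) * det3 (p a) (p b) (p e))"

text \<open>Points d of R^(n choose 2): functions on 2-element index sets, zero elsewhere.
  d {i,j} is the coordinate d_ij = d_ji.\<close>
definition Yset :: "nat \<Rightarrow> (nat \<Rightarrow> real \<times> real) \<Rightarrow> (nat set \<Rightarrow> real) set" where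
  "Yset n p = {d. (\<forall>s. s \<notin> segs n \<longrightarrow> d s = 0) \<and>
      (\<forall>s\<in>segs n. d s \<le> 0) \<and>
      (\<forall>a b c e. a < n \<and> b < n \<and> c < n \<and> e < n \<and> distinct [a, b, c, e] \<longrightarrow>
          wgt p a b c e * d {a, b} + wgt p a c b e * d {a, c} + wgt p a e b c * d {a, e}
        + wgt p b c a e * d {b, c} + wgt p b e a c * d {b, e} + wgt p c e a b * d {c, e} = 1)}"

text \<open>The maximal bounded face of Y: d_{i,i+1} = 0 for all i.\<close>
definition Yface :: "nat \<Rightarrow> (nat \<Rightarrow> real \<times> real) \<Rightarrow> (nat set \<Rightarrow> real) set" where
  "Yface n p = {d \<in> Yset n p. \<forall>i<n. d {i, Suc i mod n} = 0}"

definition amap :: "nat \<Rightarrow> (nat \<Rightarrow> real \<times> real) \<Rightarrow> (nat set \<Rightarrow> real) \<Rightarrow> nat \<Rightarrow> real" where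
  "amap n p d = (\<lambda>i. if i < n then
      (let D = det3 (p ((i + n - 1) mod n)) (p i) (p (Suc i mod n))
       in - d {(i + n - 1) mod n, Suc i mod n} / D + D)
    else 0)"

end

theory Submission
  imports Defs
begin

text \<open>
  For a triangulation \<open>T\<close> the vertex of \<open>Y\<close> is written down explicitly: for \<open>i < j\<close>,
  \<open>d\<^sub>i\<^sub>j = P\<^sub>i\<^sub>j - (\<Sum>i<k<j. det(p\<^sub>i, p\<^sub>k, p\<^sub>j) a\<^sub>k)\<close>, where \<open>a\<close> is the area vector of \<open>T\<close> and
  \<open>P\<^sub>i\<^sub>j\<close> is six times the integral of the affine function \<open>det(p\<^sub>i, -, p\<^sub>j)\<close> over the polygon
  \<open>p\<^sub>i \<dots> p\<^sub>j\<close>. For every vector \<open>a\<close> this point satisfies all quadruple relations: the weighted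
  chord functions of a quadrilateral cancel, and the remaining constants add up to 1 by a
  Pluecker relation. For the area vector it vanishes on the edges of \<open>T\<close>, because \<open>Area\<^sub>T\<close> splits
  along the triangles of \<open>T\<close>. A solution of the relations vanishing on \<open>T\<close> is unique and
  nonpositive, by induction over the chords ordered by the number of edges of \<open>T\<close> they cross;
  evaluating \<^const>\<open>amap\<close> at it gives the first claim.

  Conversely every point of the face is given by the same formula in terms of its image under
  \<^const>\<open>amap\<close>. Its zero coordinates are noncrossing, so they extend to a triangulation \<open>T\<close>;
  if the point lies below the vertex of \<open>T\<close> it equals that vertex, and otherwise moving away from
  the vertex inside the face until a further coordinate vanishes writes it as a convex combination
  of the vertex and a point with fewer nonzero coordinates. Hence the face is the convex hull of
  the vertices, and its image under the affine map \<^const>\<open>amap\<close> is the secondary polytope.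
\<close>

lemma finite_obtain_max:
  fixes f :: "'a \<Rightarrow> 'b::linorder"
  assumes "finite S" "x \<in> S"
  obtains u where "u \<in> S" "\<forall>s\<in>S. f s \<le> f u"
proof -
  have "Max (f ` S) \<in> f ` S" using assms by (intro Max_in) auto
  then obtain u where "u \<in> S" "f u = Max (f ` S)" by auto
  moreover have "\<forall>s\<in>S. f s \<le> f u" using calculation assms by simp
  ultimately show ?thesis using that by blast
qed

lemma finite_obtain_min:
  fixes f :: "'a \<Rightarrow> 'b::linorder"
  assumes "finite S" "x \<in> S"
  obtains u where "u \<in> S" "\<forall>s\<in>S. f u \<le> f s"
proof -
  have "Min (f ` S) \<in> f ` S" using assms by (intro Min_in) auto
  then obtain u where "u \<in> S" "f u = Min (f ` S)" by auto
  moreover have "\<forall>s\<in>S. f u \<le> f s" using calculation assms by simp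
  ultimately show ?thesis using that by blast
qed

lemma sum_atLeastLessThan_restrict:
  fixes f :: "nat \<Rightarrow> real"
  assumes "a \<le> x" "y \<le> e"
  shows "(\<Sum>k\<in>{x..<y}. f k) = (\<Sum>k\<in>{a..<e}. of_bool (x \<le> k \<and> k < y) * f k)"
  by (rule sum.mono_neutral_cong_right[symmetric]) (use assms in auto)

lemma sum_atLeastAtMost_restrict:
  fixes f :: "nat \<Rightarrow> real"
  assumes "i \<le> x" "y \<le> j"
  shows "(\<Sum>k\<in>{x..y}. f k) = (\<Sum>k\<in>{i..j}. of_bool (x \<le> k \<and> k \<le> y) * f k)"
  by (rule sum.mono_neutral_cong_right[symmetric]) (use assms in auto)

lemma sum_of_bool_eq:
  fixes f :: "nat \<Rightarrow> real"
  shows "finite A \<Longrightarrow> x \<in> A \<Longrightarrow> (\<Sum>k\<in>A. of_bool (k = x) * f k) = f x"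
  by (simp add: sum.delta)

lemma add_mod_eq_if:
  fixes k q n :: nat
  assumes "k < n" "q < n"
  shows "(k + q) mod n = (if k + q < n then k + q else k + q - n)"
proof (cases "k + q < n")
  case False
  then have "(k + q) mod n = (k + q - n) mod n" by (intro le_mod_geq) simp
  also have "\<dots> = k + q - n" using assms by simp
  finally show ?thesis using False by simp
qed simp

lemma sorted_list_of_set_last:
  assumes "finite K" "K \<noteq> {}"
  shows "last (sorted_list_of_set K) = Max K"
proof (rule Max_eqI[symmetric])
  let ?L = "sorted_list_of_set K"
  have "?L \<noteq> []" using assms by simp
  then have "last ?L \<in> set ?L" by (rule last_in_set)
  then show "last ?L \<in> K" using assms by simp
  show "x \<le> last ?L" if "x \<in> K" for x
  proof -
    have "x \<in> set ?L" using that assms by simp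
    then obtain i where "i < length ?L" "?L ! i = x" by (auto simp: in_set_conv_nth)
    moreover have "last ?L = ?L ! (length ?L - 1)" using \<open>?L \<noteq> []\<close> by (simp add: last_conv_nth)
    ultimately show ?thesis using sorted_nth_mono[of ?L i "length ?L - 1"] by simp
  qed
qed (use assms in simp)

lemma sum_lessThan_add:
  fixes f :: "nat \<Rightarrow> real"
  shows "(\<Sum>l<m1 + m2. f l) = (\<Sum>l<m1. f l) + (\<Sum>l<m2. f (m1 + l))"
  by (induction m2) simp_all

definition cvx_closed :: "(nat \<Rightarrow> real) set \<Rightarrow> bool" where
  "cvx_closed C \<longleftrightarrow> (\<forall>x\<in>C. \<forall>y\<in>C. \<forall>t. 0 \<le> t \<longrightarrow> t \<le> 1 \<longrightarrow> (\<lambda>j. t * x j + (1 - t) * y j) \<in> C)"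

lemma cvx_comb_hull_subset:
  assumes "cvx_closed C" "S \<subseteq> C"
  shows "cvx_comb_hull S \<subseteq> C"
proof
  fix x assume "x \<in> cvx_comb_hull S"
  then obtain m :: nat and c v where "\<forall>l<m. 0 \<le> c l \<and> v l \<in> S" "(\<Sum>l<m. c l) = 1"
    "x = (\<lambda>j. \<Sum>l<m. c l * v l j)"
    unfolding cvx_comb_hull_def by blast
  then show "x \<in> C"
  proof (induction m arbitrary: c x)
    case (Suc m)
    show ?case
    proof (cases "c m = 1")
      case True
      then have "(\<Sum>l<m. c l) = 0" using Suc.prems(2) by simp
      then have "\<forall>l<m. c l = 0" using Suc.prems(1) sum_nonneg_eq_0_iff[of "{..<m}" c] by simp
      then have "x = v m" using Suc.prems(3) True by simp
      then show ?thesis using Suc.prems(1) assms(2) by auto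
    next
      case False
      define c' where "c' l = c l / (1 - c m)" for l
      have "c m \<le> 1" using Suc.prems(1,2) sum_nonneg[of "{..<m}" c] by simp
      then have "c m < 1" using False by simp
      have "(\<lambda>j. \<Sum>l<m. c' l * v l j) \<in> C"
      proof (rule Suc.IH[of c'])
        show "\<forall>l<m. 0 \<le> c' l \<and> v l \<in> S" using Suc.prems(1) \<open>c m < 1\<close> by (simp add: c'_def)
        show "(\<Sum>l<m. c' l) = 1"
          using Suc.prems(2) \<open>c m < 1\<close> by (simp add: c'_def sum_divide_distrib[symmetric])
      qed simp
      moreover have "x = (\<lambda>j. c m * v m j + (1 - c m) * (\<Sum>l<m. c' l * v l j))"
        using Suc.prems(3) \<open>c m < 1\<close> by (simp add: c'_def sum_distrib_left add.commute)
      ultimately show ?thesis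
        using assms(1) Suc.prems(1) \<open>c m < 1\<close> assms(2) unfolding cvx_closed_def by auto
    qed
  qed simp
qed

lemma cvx_comb_hull_closed: "cvx_closed (cvx_comb_hull S)"
  unfolding cvx_closed_def
proof (intro ballI allI impI)
  fix x y and t :: real
  assume "x \<in> cvx_comb_hull S" "y \<in> cvx_comb_hull S" and t: "0 \<le> t" "t \<le> 1"
  then obtain m1 m2 :: nat and c1 v1 c2 v2
    where 1: "\<forall>l<m1. 0 \<le> c1 l \<and> v1 l \<in> S" "(\<Sum>l<m1. c1 l) = 1" "x = (\<lambda>j. \<Sum>l<m1. c1 l * v1 l j)"
      and 2: "\<forall>l<m2. 0 \<le> c2 l \<and> v2 l \<in> S" "(\<Sum>l<m2. c2 l) = 1" "y = (\<lambda>j. \<Sum>l<m2. c2 l * v2 l j)"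
    unfolding cvx_comb_hull_def by blast
  define c where "c l = (if l < m1 then t * c1 l else (1 - t) * c2 (l - m1))" for l
  define v where "v l = (if l < m1 then v1 l else v2 (l - m1))" for l
  have split: "(\<Sum>l<m1 + m2. c l * w l)
      = t * (\<Sum>l<m1. c1 l * w l) + (1 - t) * (\<Sum>l<m2. c2 l * w (m1 + l))"
    for w :: "nat \<Rightarrow> real"
    unfolding sum_lessThan_add by (simp add: c_def sum_distrib_left mult.assoc)
  have "\<forall>l<m1 + m2. 0 \<le> c l \<and> v l \<in> S"
    using 1(1) 2(1) t by (auto simp: c_def v_def)
  moreover have "(\<Sum>l<m1 + m2. c l) = 1" using split[of "\<lambda>_. 1"] 1(2) 2(2) by simp
  moreover have "(\<lambda>j. t * x j + (1 - t) * y j) = (\<lambda>j. \<Sum>l<m1 + m2. c l * v l j)"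
    using split 1(3) 2(3) by (simp add: v_def)
  ultimately show "(\<lambda>j. t * x j + (1 - t) * y j) \<in> cvx_comb_hull S"
    unfolding cvx_comb_hull_def by blast
qed

lemma subset_cvx_comb_hull: "S \<subseteq> cvx_comb_hull S"
proof
  fix v assume "v \<in> S"
  then show "v \<in> cvx_comb_hull S"
    unfolding cvx_comb_hull_def
    by (intro CollectI exI[of _ 1] exI[of _ "\<lambda>_. 1"] exI[of _ "\<lambda>_. v"]) simp
qed

lemma det3_rotate: "det3 a b c = det3 b c a"
  by (simp add: det3_def algebra_simps)

lemma det3_swap12: "det3 b a c = - det3 a b c"
  by (simp add: det3_def algebra_simps)

lemma det3_swap23: "det3 a c b = - det3 a b c"
  by (simp add: det3_def algebra_simps)

lemma det3_degenerate [simp]: "det3 a a b = 0" "det3 a b a = 0" "det3 a b b = 0"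
  by (simp_all add: det3_def algebra_simps)

definition cyclic_order :: "nat \<Rightarrow> nat \<Rightarrow> nat \<Rightarrow> bool" where
  "cyclic_order a b c \<longleftrightarrow> (a < b \<and> b < c) \<or> (b < c \<and> c < a) \<or> (c < a \<and> a < b)"

definition chords_cross :: "nat \<Rightarrow> nat \<Rightarrow> nat \<Rightarrow> nat \<Rightarrow> bool" where
  "chords_cross i j k l \<longleftrightarrow> distinct [i, j, k, l] \<and> (cyclic_order i k j \<longleftrightarrow> \<not> cyclic_order i l j)"

text \<open>\<open>smt\<close> proves the order facts about \<^const>\<open>cyclic_order\<close> below reliably only over
  \<^typ>\<open>int\<close>, hence the casts.\<close>

lemmas cast_order_to_int =
  of_nat_less_iff[where 'a=int, symmetric] of_nat_le_iff[where 'a=int, symmetric]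
  of_nat_eq_iff[where 'a=int, symmetric]

lemma cyclic_order_rotate: "cyclic_order a b c \<longleftrightarrow> cyclic_order b c a"
  unfolding cyclic_order_def by auto

lemma cyclic_order_asym: "cyclic_order a b c \<Longrightarrow> \<not> cyclic_order a c b"
  unfolding cyclic_order_def by auto

lemma cyclic_order_distinct: "cyclic_order a b c \<Longrightarrow> a \<noteq> b \<and> b \<noteq> c \<and> a \<noteq> c"
  unfolding cyclic_order_def by auto

lemma cyclic_order_cases: "distinct [a, b, c] \<Longrightarrow> cyclic_order a b c \<or> cyclic_order a c b"
  unfolding cyclic_order_def by auto

lemma cyclic_order_trans: "cyclic_order x u y \<Longrightarrow> cyclic_order x y v \<Longrightarrow> cyclic_order x u v"
  unfolding cyclic_order_def by (simp only: cast_order_to_int) (smt (verit))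

lemma cyclic_order_succ:
  assumes "x < n" "y < n" "y \<noteq> x" "y \<noteq> Suc x mod n"
  shows "cyclic_order x (Suc x mod n) y"
proof (cases "Suc x < n")
  case False
  then have "Suc x = n" using assms(1) by simp
  then show ?thesis using assms unfolding cyclic_order_def by auto
qed (use assms in \<open>auto simp: cyclic_order_def\<close>)

lemma cyclic_order_pred:
  assumes "x < n" "y < n" "y \<noteq> x" "y \<noteq> (x + n - 1) mod n"
  shows "cyclic_order x y ((x + n - 1) mod n)"
proof (cases x)
  case (Suc x')
  then have "(x + n - 1) mod n = x'" using assms(1) by simp
  then show ?thesis using assms Suc unfolding cyclic_order_def by auto
qed (use assms in \<open>auto simp: cyclic_order_def\<close>)

lemma cyclic_order_iff_offset:
  assumes "x < n" "a < n" "b < n" "a \<noteq> x" "b \<noteq> x"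
  shows "cyclic_order x a b \<longleftrightarrow> (a + n - x) mod n < (b + n - x) mod n"
proof -
  have "(z + n - x) mod n = (if x \<le> z then z - x else z + n - x)" if "z < n" for z
  proof (cases "x \<le> z")
    case True
    then have "(z + n - x) mod n = ((z - x) + n) mod n" by (simp add: add.commute)
    also have "\<dots> = z - x" using that by simp
    finally show ?thesis using True by simp
  qed (use assms(1) in simp)
  then show ?thesis using assms unfolding cyclic_order_def by simp linarith
qed

lemma Suc_pred_mod: "x < n \<Longrightarrow> Suc ((x + n - 1) mod n) mod n = x"
  by (cases x) (auto simp: mod_Suc)

lemma pred_ne_succ: "3 \<le> n \<Longrightarrow> i < n \<Longrightarrow> (i + n - 1) mod n \<noteq> Suc i mod n"
  by (cases i; cases "Suc i < n") (auto simp: mod_Suc)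

lemma cyclic_order_pred_succ:
  assumes "3 \<le> n" "i < n"
  shows "cyclic_order ((i + n - 1) mod n) i (Suc i mod n)"
proof -
  have "Suc i mod n \<noteq> i" using assms by (simp add: mod_Suc)
  then have "cyclic_order i (Suc i mod n) ((i + n - 1) mod n)"
    using cyclic_order_pred[of i n "Suc i mod n"] pred_ne_succ[OF assms] assms by simp
  then show ?thesis using cyclic_order_rotate by blast
qed

lemma segs_iff: "{i, j} \<in> segs n \<longleftrightarrow> i \<noteq> j \<and> i < n \<and> j < n"
proof
  assume "{i, j} \<in> segs n"
  then obtain a b where "{i, j} = {a, b}" "a < b" "b < n" unfolding segs_def by blast
  then show "i \<noteq> j \<and> i < n \<and> j < n" unfolding doubleton_eq_iff by auto
next
  assume "i \<noteq> j \<and> i < n \<and> j < n"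
  then show "{i, j} \<in> segs n" unfolding segs_def
    by (cases "i < j") (auto, metis insert_commute linorder_neqE_nat)
qed

lemma segsE:
  assumes "s \<in> segs n"
  obtains i j where "s = {i, j}" "i < j" "j < n"
  using assms unfolding segs_def by blast

lemma finite_segs: "finite (segs n)"
proof (rule finite_subset)
  show "segs n \<subseteq> Pow {..<n}" unfolding segs_def by auto
qed simp

lemma noncrossing_commute: "noncrossing s t \<longleftrightarrow> noncrossing t s"
  unfolding noncrossing_def by blast

lemma noncrossing_iff_not_chords_cross:
  assumes "i \<noteq> j" "k \<noteq> l"
  shows "noncrossing {i, j} {k, l} \<longleftrightarrow> \<not> chords_cross i j k l"
proof
  assume nc: "noncrossing {i, j} {k, l}"
  show "\<not> chords_cross i j k l"
  proof
    assume "chords_cross i j k l"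
    then have "(min i j < min k l \<and> min k l < max i j \<and> max i j < max k l) \<or>
          (min k l < min i j \<and> min i j < max k l \<and> max k l < max i j)"
      unfolding chords_cross_def cyclic_order_def min_def max_def
      by (simp only: cast_order_to_int distinct.simps list.set insert_iff empty_iff split: if_split)
        (smt (verit))
    moreover have "{i, j} = {min i j, max i j}" "{k, l} = {min k l, max k l}"
      by (auto simp: min_def max_def)
    ultimately show False using nc unfolding noncrossing_def crossing_def by metis
  qed
next
  assume nx: "\<not> chords_cross i j k l"
  have "\<not> crossing {i, j} {k, l} \<and> \<not> crossing {k, l} {i, j}"
    unfolding crossing_def
  proof (intro conjI notI; elim exE conjE)
    fix a b c e
    assume "{i, j} = {a, b}" "{k, l} = {c, e}" "a < c" "c < b" "b < e"
    then show False using nx unfolding chords_cross_def cyclic_order_def doubleton_eq_iff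
      by (elim disjE conjE; simp; linarith)
  next
    fix a b c e
    assume "{k, l} = {a, b}" "{i, j} = {c, e}" "a < c" "c < b" "b < e"
    then show False using nx unfolding chords_cross_def cyclic_order_def doubleton_eq_iff
      by (elim disjE conjE; simp; linarith)
  qed
  then show "noncrossing {i, j} {k, l}" unfolding noncrossing_def by blast
qed

lemma noncrossing_self: "s \<in> segs n \<Longrightarrow> noncrossing s s"
  by (erule segsE) (simp add: noncrossing_iff_not_chords_cross chords_cross_def)

locale convex_polygon =
  fixes n :: nat and p :: "nat \<Rightarrow> real \<times> real"
  assumes convex: "convex_ccw n p"
begin

lemma three_le_n: "3 \<le> n"
  using convex unfolding convex_ccw_def by simp

lemma det3_pos:
  assumes "i < n" "j < n" "k < n" "cyclic_order i j k"
  shows "det3 (p i) (p j) (p k) > 0"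
proof -
  have sorted: "det3 (p a) (p b) (p c) > 0" if "a < b" "b < c" "c < n" for a b c
    using convex that unfolding convex_ccw_def by blast
  from assms(4) consider "i < j \<and> j < k" | "j < k \<and> k < i" | "k < i \<and> i < j"
    unfolding cyclic_order_def by blast
  then show ?thesis
    by cases (use sorted[of i j k] sorted[of j k i] sorted[of k i j] assms
        det3_rotate[of "p i" "p j" "p k"] det3_rotate[of "p j" "p k" "p i"] in auto)
qed

lemma det3_neg:
  assumes "i < n" "j < n" "k < n" "cyclic_order i k j"
  shows "det3 (p i) (p j) (p k) < 0"
  using det3_pos[OF assms(1,3,2,4)] det3_swap23[of "p i" "p k" "p j"] by simp

lemma det3_nonzero:
  assumes "i < n" "j < n" "k < n" "distinct [i, j, k]"
  shows "det3 (p i) (p j) (p k) \<noteq> 0"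
  using cyclic_order_cases[OF assms(4)] det3_pos[OF assms(1-3)] det3_neg[OF assms(1-3)] by force

lemma wgt_pos_same_side:
  assumes "x < n" "y < n" "u < n" "v < n" "distinct [x, y, u, v]"
    and "cyclic_order x y u \<longleftrightarrow> cyclic_order x y v"
  shows "wgt p x y u v > 0"
proof (cases "cyclic_order x y u")
  case True
  then show ?thesis using assms det3_pos unfolding wgt_def by simp
next
  case False
  then have "cyclic_order x u y" "cyclic_order x v y" using assms cyclic_order_cases
    by (metis distinct_length_2_or_more distinct_singleton)+
  then show ?thesis using assms det3_neg unfolding wgt_def by (simp add: mult_neg_neg)
qed

end

section \<open>The quadruple relations\<close>

definition quad_sum :: "(nat \<Rightarrow> real \<times> real) \<Rightarrow> (nat set \<Rightarrow> real) \<Rightarrow> nat \<Rightarrow> nat \<Rightarrow> nat \<Rightarrow> nat \<Rightarrow> real"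
  where
  "quad_sum p d a b c e =
       wgt p a b c e * d {a, b} + wgt p a c b e * d {a, c} + wgt p a e b c * d {a, e}
     + wgt p b c a e * d {b, c} + wgt p b e a c * d {b, e} + wgt p c e a b * d {c, e}"

definition quad_rel :: "nat \<Rightarrow> (nat \<Rightarrow> real \<times> real) \<Rightarrow> real \<Rightarrow> (nat set \<Rightarrow> real) \<Rightarrow> bool" where
  "quad_rel n p \<kappa> d \<longleftrightarrow>
     (\<forall>a b c e. a < n \<and> b < n \<and> c < n \<and> e < n \<and> distinct [a, b, c, e] \<longrightarrow> quad_sum p d a b c e = \<kappa>)"

lemma Yset_iff:
  "d \<in> Yset n p \<longleftrightarrow> (\<forall>s. s \<notin> segs n \<longrightarrow> d s = 0) \<and> (\<forall>s\<in>segs n. d s \<le> 0) \<and> quad_rel n p 1 d"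
  unfolding Yset_def quad_rel_def quad_sum_def by simp

lemma wgt_swap12: "wgt p a b c e = wgt p b a c e"
  unfolding wgt_def using det3_swap12[of "p a" "p b"] by simp

lemma wgt_swap34: "wgt p a b c e = wgt p a b e c"
  unfolding wgt_def by (simp add: mult.commute)

lemma quad_sum_swap12: "quad_sum p d a b c e = quad_sum p d b a c e"
  and quad_sum_swap23: "quad_sum p d a b c e = quad_sum p d a c b e"
  and quad_sum_swap34: "quad_sum p d a b c e = quad_sum p d a b e c"
  unfolding quad_sum_def using wgt_swap12[of p] wgt_swap34[of p]
  by (simp_all add: insert_commute algebra_simps)

lemma quad_sum_lincomb:
  "quad_sum p (\<lambda>s. \<alpha> * d s + \<beta> * d' s) a b c e
    = \<alpha> * quad_sum p d a b c e + \<beta> * quad_sum p d' a b c e"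
  unfolding quad_sum_def by (simp add: algebra_simps)

lemma distinct4_sorted_induct:
  fixes P :: "'a::linorder \<Rightarrow> 'a \<Rightarrow> 'a \<Rightarrow> 'a \<Rightarrow> bool"
  assumes sorted: "\<And>a b c e. a < b \<Longrightarrow> b < c \<Longrightarrow> c < e \<Longrightarrow> P a b c e"
    and swap12: "\<And>a b c e. P a b c e \<Longrightarrow> P b a c e"
    and swap23: "\<And>a b c e. P a b c e \<Longrightarrow> P a c b e"
    and swap34: "\<And>a b c e. P a b c e \<Longrightarrow> P a b e c"
    and "distinct [a, b, c, e]"
  shows "P a b c e"
proof -
  have min_first: "P a b c e" if "a < b" "a < c" "a < e" "distinct [b, c, e]" for a b c e
  proof -
    from that consider "b < c \<and> c < e" | "b < e \<and> e < c" | "c < b \<and> b < e" | "c < e \<and> e < b"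
      | "e < b \<and> b < c" | "e < c \<and> c < b" by fastforce
    then show ?thesis
      by cases (use that in \<open>metis sorted swap23 swap34\<close>)+
  qed
  from assms(5) consider "a < b \<and> a < c \<and> a < e" | "b < a \<and> b < c \<and> b < e"
    | "c < a \<and> c < b \<and> c < e" | "e < a \<and> e < b \<and> e < c" by fastforce
  then show ?thesis
    by cases (use assms(5) in \<open>metis distinct_length_2_or_more distinct_singleton min_first swap12
      swap23 swap34\<close>)+
qed

lemma quad_rel_if_sorted:
  assumes "\<And>a b c e. a < b \<Longrightarrow> b < c \<Longrightarrow> c < e \<Longrightarrow> e < n \<Longrightarrow> quad_sum p d a b c e = \<kappa>"
  shows "quad_rel n p \<kappa> d"
  unfolding quad_rel_def
proof (intro allI impI)
  fix a b c e
  assume "a < n \<and> b < n \<and> c < n \<and> e < n \<and> distinct [a, b, c, e]"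
  then show "quad_sum p d a b c e = \<kappa>"
    using distinct4_sorted_induct[where P = "\<lambda>a b c e. a < n \<and> b < n \<and> c < n \<and> e < n
      \<longrightarrow> quad_sum p d a b c e = \<kappa>"]
      assms quad_sum_swap12 quad_sum_swap23 quad_sum_swap34 by (smt (verit))
qed

section \<open>An explicit solution of the quadruple relations\<close>

lemma wgt_star_identity:
  fixes a b c e z :: "real \<times> real"
  assumes "det3 a b c \<noteq> 0" "det3 a b e \<noteq> 0" "det3 a c e \<noteq> 0"
  shows "det3 a z b / (det3 a b c * det3 a b e) + det3 a z c / (det3 a c b * det3 a c e)
    + det3 a z e / (det3 a e b * det3 a e c) = 0"
proof -
  have "det3 a z b * det3 a c e - det3 a z c * det3 a b e + det3 a z e * det3 a b c = 0"
    unfolding det3_def by algebra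
  then show ?thesis
    using assms det3_swap23[of a b c] det3_swap23[of a b e] det3_swap23[of a c e]
    by (simp add: field_simps)
qed

lemma wgt_square_identity:
  fixes a b c e :: "real \<times> real"
  defines "sq x y \<equiv> det3 (0, 0) x y ^ 2"
  assumes "det3 a b c \<noteq> 0" "det3 a b e \<noteq> 0" "det3 a c e \<noteq> 0" "det3 b c e \<noteq> 0"
  shows "sq a b / (det3 a b c * det3 a b e) + sq a c / (det3 a c b * det3 a c e)
    + sq a e / (det3 a e b * det3 a e c) + sq b c / (det3 b c a * det3 b c e)
    + sq b e / (det3 b e a * det3 b e c) + sq c e / (det3 c e a * det3 c e b) = 1"
proof -
  define A B C D
    where "A = det3 a b c" and "B = det3 a b e" and "C = det3 a c e" and "D = det3 b c e"
  have flips: "det3 a c b = - A" "det3 a e b = - B" "det3 a e c = - C" "det3 b c a = A"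
    "det3 b e a = B" "det3 b e c = - D" "det3 c e a = C" "det3 c e b = D"
    unfolding A_def B_def C_def D_def by (simp_all add: det3_def algebra_simps)
  define sab where "sab = det3 (0,0) a b"
  define sac where "sac = det3 (0,0) a c"
  define sae where "sae = det3 (0,0) a e"
  define sbc where "sbc = det3 (0,0) b c"
  define sbe where "sbe = det3 (0,0) b e"
  define sce where "sce = det3 (0,0) c e"
  note s_defs = sab_def sac_def sae_def sbc_def sbe_def sce_def
  have dets: "A = sab + sbc - sac" "B = sab + sbe - sae" "C = sac + sce - sae" "D = sbc + sce - sbe"
    unfolding A_def B_def C_def D_def s_defs det3_def by (simp_all add: algebra_simps)
  \<comment> \<open>the Pluecker relation among the six \<open>det3 (0,0) x y\<close>\<close>
  have "sab * sce - sac * sbe + sae * sbc = 0"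
    unfolding s_defs det3_def by (simp add: algebra_simps)
  then have numerator: "sab^2 * C * D - sac^2 * B * D + sae^2 * A * D + sbc^2 * B * C
      - sbe^2 * A * C + sce^2 * A * B = A * B * C * D"
    unfolding dets by algebra
  have "A \<noteq> 0" "B \<noteq> 0" "C \<noteq> 0" "D \<noteq> 0"
    using assms(2-5) unfolding A_def B_def C_def D_def by auto
  then have "sab^2 / (A * B) + sac^2 / (- A * C) + sae^2 / (B * C) + sbc^2 / (A * D)
      + sbe^2 / (B * - D) + sce^2 / (C * D)
    = (sab^2 * C * D - sac^2 * B * D + sae^2 * A * D + sbc^2 * B * C - sbe^2 * A * C
      + sce^2 * A * B) / (A * B * C * D)"
    by (simp add: field_simps)
  also have "\<dots> = 1"
    using numerator \<open>A \<noteq> 0\<close> \<open>B \<noteq> 0\<close> \<open>C \<noteq> 0\<close> \<open>D \<noteq> 0\<close> by simp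
  finally show ?thesis
    unfolding sq_def s_defs[symmetric] flips A_def[symmetric] B_def[symmetric] C_def[symmetric]
      D_def[symmetric] by simp
qed

text \<open>For an affine function \<open>g\<close>, \<open>triangle_integral g u v\<close> is six times the integral of \<open>g\<close>
  over the oriented triangle \<open>0 u v\<close>, so \<open>polygon_integral p g i j\<close> below is six times the
  integral of \<open>g\<close> over the polygon \<open>p i, p (i + 1), \<dots>, p j\<close>.\<close>

definition triangle_integral :: "(real \<times> real \<Rightarrow> real) \<Rightarrow> real \<times> real \<Rightarrow> real \<times> real \<Rightarrow> real" where
  "triangle_integral g u v = det3 (0, 0) u v * (g (0, 0) + g u + g v)"

definition polygon_integral :: "(nat \<Rightarrow> real \<times> real) \<Rightarrow> (real \<times> real \<Rightarrow> real) \<Rightarrow> nat \<Rightarrow> nat \<Rightarrow> real" where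
  "polygon_integral p g i j = (\<Sum>k\<in>{i..<j}. triangle_integral g (p k) (p (Suc k)))
    + triangle_integral g (p j) (p i)"

definition affine_fun :: "(real \<times> real \<Rightarrow> real) \<Rightarrow> bool" where
  "affine_fun g \<longleftrightarrow> (\<exists>\<alpha> \<beta> \<gamma>. \<forall>z. g z = \<alpha> * fst z + \<beta> * snd z + \<gamma>)"

definition chord :: "(nat \<Rightarrow> real \<times> real) \<Rightarrow> nat \<Rightarrow> nat \<Rightarrow> real \<times> real \<Rightarrow> real" where
  "chord p i j z = det3 (p i) z (p j)"

lemma triangle_integral_antisym: "triangle_integral g u v = - triangle_integral g v u"
  unfolding triangle_integral_def det3_def by (simp add: algebra_simps)

lemma triangle_integral_triangle:
  assumes "affine_fun g"
  shows "triangle_integral g u v + triangle_integral g v w + triangle_integral g w u = det3 u v w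
    * (g u + g v + g w)"
proof -
  obtain \<alpha> \<beta> \<gamma> where "\<And>z. g z = \<alpha> * fst z + \<beta> * snd z + \<gamma>"
    using assms unfolding affine_fun_def by blast
  then show ?thesis unfolding triangle_integral_def det3_def by (simp add: algebra_simps)
qed

lemma triangle_integral_chord_closing: "triangle_integral (chord p i j) (p j) (p i)
  = det3 (0, 0) (p i) (p j) ^ 2"
  unfolding triangle_integral_def chord_def det3_def by (simp add: power2_eq_square algebra_simps)

lemma affine_fun_chord: "affine_fun (chord p i j)"
  unfolding affine_fun_def chord_def det3_def
  by (rule exI[of _ "snd (p j) - snd (p i)"], rule exI[of _ "fst (p i) - fst (p j)"],
      rule exI[of _ "fst (p j) * snd (p i) - fst (p i) * snd (p j)"]) (simp add: algebra_simps)

lemma chord_endpoints [simp]: "chord p i j (p i) = 0" "chord p i j (p j) = 0"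
  unfolding chord_def by simp_all

lemma chord_swap: "chord p j i z = - chord p i j z"
  unfolding chord_def det3_def by (simp add: algebra_simps)

lemma polygon_integral_adjacent [simp]: "polygon_integral p g i (Suc i) = 0"
  unfolding polygon_integral_def using triangle_integral_antisym[of g "p i" "p (Suc i)"] by simp

lemma polygon_integral_split:
  assumes "i \<le> m" "m \<le> j" "affine_fun g"
  shows "polygon_integral p g i j = polygon_integral p g i m + polygon_integral p g m j
    + det3 (p i) (p m) (p j) * (g (p i) + g (p m) + g (p j))"
  unfolding polygon_integral_def sum.atLeastLessThan_concat[OF assms(1,2), symmetric]
  using triangle_integral_triangle[OF assms(3), of "p i" "p m" "p j"]
    triangle_integral_antisym[of g "p m" "p i"] triangle_integral_antisym[of g "p j" "p m"] by simp

text \<open>Every point of the face is recovered from its image \<open>a\<close> under \<^const>\<open>amap\<close> by these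
  formulas (\<open>Yface_eq_point_of_areas\<close> below).\<close>

definition coord_of_areas :: "(nat \<Rightarrow> real \<times> real) \<Rightarrow> (nat \<Rightarrow> real) \<Rightarrow> nat \<Rightarrow> nat \<Rightarrow> real" where
  "coord_of_areas p a i j = polygon_integral p (chord p i j) i j
    - (\<Sum>k\<in>{i<..<j}. chord p i j (p k) * a k)"

definition point_of_areas :: "nat \<Rightarrow> (nat \<Rightarrow> real \<times> real) \<Rightarrow> (nat \<Rightarrow> real) \<Rightarrow> nat set \<Rightarrow> real" where
  "point_of_areas n p a s = (if s \<in> segs n then coord_of_areas p a (Min s) (Max s) else 0)"

lemma point_of_areas_pair: "i < j \<Longrightarrow> j < n \<Longrightarrow> point_of_areas n p a {i, j} = coord_of_areas p a i j"
  unfolding point_of_areas_def by (simp add: segs_iff)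

lemma coord_of_areas_adjacent [simp]: "coord_of_areas p a i (Suc i) = 0"
proof -
  have "{i<..<Suc i} = {}" by auto
  then show ?thesis unfolding coord_of_areas_def by simp
qed

lemma coord_of_areas_ear:
  "coord_of_areas p a i (Suc (Suc i)) = det3 (p i) (p (Suc i)) (p (Suc (Suc i))) ^ 2
      - det3 (p i) (p (Suc i)) (p (Suc (Suc i))) * a (Suc i)"
proof -
  have "polygon_integral p (chord p i (Suc (Suc i))) i (Suc (Suc i))
    = det3 (p i) (p (Suc i)) (p (Suc (Suc i))) ^ 2"
    using polygon_integral_split[of i "Suc i" "Suc (Suc i)" "chord p i (Suc (Suc i))" p]
      affine_fun_chord
    by (simp add: chord_def power2_eq_square)
  moreover have "{i<..<Suc (Suc i)} = {Suc i}" by auto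
  ultimately show ?thesis unfolding coord_of_areas_def by (simp add: chord_def)
qed

lemma coord_of_areas_diff:
  "coord_of_areas p b i j - coord_of_areas p a i j = (\<Sum>k\<in>{i<..<j}. chord p i j (p k) * (a k - b k))"
  unfolding coord_of_areas_def by (simp add: sum_subtractf algebra_simps)

lemma point_of_areas_cong:
  assumes "\<And>k. 0 < k \<Longrightarrow> k < n - 1 \<Longrightarrow> a k = b k"
  shows "point_of_areas n p a = point_of_areas n p b"
proof
  fix s
  have "coord_of_areas p a i j = coord_of_areas p b i j" if "i < j" "j < n" for i j
    unfolding coord_of_areas_def using assms that
      by (intro arg_cong2[where f = minus] sum.cong) auto
  then show "point_of_areas n p a s = point_of_areas n p b s"
    unfolding point_of_areas_def by (auto elim!: segsE)
qed

text \<open>The weighted chord functions of those chords of the quadrilateral \<open>a b c e\<close> that pass over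
  the edge \<open>p k p (k + 1)\<close> of the polygon.\<close>

definition quad_chord_comb ::
  "(nat \<Rightarrow> real \<times> real) \<Rightarrow> nat \<Rightarrow> nat \<Rightarrow> nat \<Rightarrow> nat \<Rightarrow> nat \<Rightarrow> real \<times> real \<Rightarrow> real" where
  "quad_chord_comb p a b c e k z =
       of_bool (a \<le> k \<and> k < b) * wgt p a b c e * chord p a b z
     + of_bool (a \<le> k \<and> k < c) * wgt p a c b e * chord p a c z
     + of_bool (a \<le> k \<and> k < e) * wgt p a e b c * chord p a e z
     + of_bool (b \<le> k \<and> k < c) * wgt p b c a e * chord p b c z
     + of_bool (b \<le> k \<and> k < e) * wgt p b e a c * chord p b e z
     + of_bool (c \<le> k \<and> k < e) * wgt p c e a b * chord p c e z"

lemma quad_sum_point_of_areas_expand: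
  assumes abce: "a < b" "b < c" "c < e" "e < n"
  shows "quad_sum p (point_of_areas n p x) a b c e
    = (\<Sum>k\<in>{a..<e}. triangle_integral (quad_chord_comb p a b c e k) (p k) (p (Suc k)))
      + (wgt p a b c e * triangle_integral (chord p a b) (p b) (p a)
       + wgt p a c b e * triangle_integral (chord p a c) (p c) (p a)
       + wgt p a e b c * triangle_integral (chord p a e) (p e) (p a)
       + wgt p b c a e * triangle_integral (chord p b c) (p c) (p b)
       + wgt p b e a c * triangle_integral (chord p b e) (p e) (p b)
       + wgt p c e a b * triangle_integral (chord p c e) (p e) (p c))
      - (\<Sum>k\<in>{a..<e}. quad_chord_comb p a b c e k (p k) * x k)" (is "_ = ?rhs")
proof -
  have polygon: "polygon_integral p (chord p u v) u v = triangle_integral (chord p u v) (p v) (p u)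
      + (\<Sum>k\<in>{a..<e}. of_bool (u \<le> k \<and> k < v) * triangle_integral (chord p u v) (p k) (p (Suc k)))"
    if "a \<le> u" "v \<le> e" for u v
    unfolding polygon_integral_def by (simp only: sum_atLeastLessThan_restrict[OF that])
  have inner: "(\<Sum>k\<in>{u<..<v}. chord p u v (p k) * x k)
      = (\<Sum>k\<in>{a..<e}. of_bool (u \<le> k \<and> k < v) * (chord p u v (p k) * x k))"
    if "a \<le> u" "v \<le> e" for u v
    by (rule sum.mono_neutral_cong_right[symmetric]) (use that in \<open>auto simp: less_le\<close>)
  have edge: "triangle_integral (quad_chord_comb p a b c e k) (p k) (p (Suc k)) =
       of_bool (a \<le> k \<and> k < b) * wgt p a b c e * triangle_integral (chord p a b) (p k) (p (Suc k))
     + of_bool (a \<le> k \<and> k < c) * wgt p a c b e * triangle_integral (chord p a c) (p k) (p (Suc k))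
     + of_bool (a \<le> k \<and> k < e) * wgt p a e b c * triangle_integral (chord p a e) (p k) (p (Suc k))
     + of_bool (b \<le> k \<and> k < c) * wgt p b c a e * triangle_integral (chord p b c) (p k) (p (Suc k))
     + of_bool (b \<le> k \<and> k < e) * wgt p b e a c * triangle_integral (chord p b e) (p k) (p (Suc k))
     + of_bool (c \<le> k \<and> k < e) * wgt p c e a b
       * triangle_integral (chord p c e) (p k) (p (Suc k))" for k
    unfolding quad_chord_comb_def triangle_integral_def by (simp add: algebra_simps)
  have "quad_sum p (point_of_areas n p x) a b c e
      = wgt p a b c e * coord_of_areas p x a b + wgt p a c b e * coord_of_areas p x a c
      + wgt p a e b c * coord_of_areas p x a e + wgt p b c a e * coord_of_areas p x b c
      + wgt p b e a c * coord_of_areas p x b e + wgt p c e a b * coord_of_areas p x c e"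
    unfolding quad_sum_def using abce by (simp add: point_of_areas_pair)
  also have "\<dots> = ?rhs"
    unfolding coord_of_areas_def edge unfolding quad_chord_comb_def using abce
    apply (simp only: polygon inner less_imp_le order_refl)
    apply (simp add: sum.distrib sum_distrib_left algebra_simps del: sum_mult_of_bool_eq
      sum_of_bool_mult_eq)
    done
  finally show ?thesis .
qed

context convex_polygon
begin

lemma wgt_chord_star:
  assumes "a < n" "b < n" "c < n" "e < n" "distinct [a, b, c, e]"
  shows "wgt p a b c e * chord p a b z + wgt p a c b e * chord p a c z + wgt p a e b c
    * chord p a e z = 0"
  using wgt_star_identity[of "p a" "p b" "p c" "p e" z] det3_nonzero assms
  unfolding wgt_def chord_def by simp

text \<open>The three star identities, at \<open>a\<close>, \<open>b\<close> and \<open>e\<close>, make \<^const>\<open>quad_chord_comb\<close> vanish, so only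
  the closing terms of \<^const>\<open>polygon_integral\<close> survive in the quadruple sum.\<close>

lemma quad_chord_comb_zero:
  assumes abce: "a < b" "b < c" "c < e" "e < n" and "a \<le> k" "k < e"
  shows "quad_chord_comb p a b c e k z = 0"
proof -
  have star_a: "wgt p a b c e * chord p a b z + wgt p a c b e * chord p a c z + wgt p a e b c
    * chord p a e z = 0"
    using wgt_chord_star[of a b c e z] abce by simp
  have star_b: "- (wgt p a b c e * chord p a b z) + wgt p b c a e * chord p b c z + wgt p b e a c
    * chord p b e z = 0"
    using wgt_chord_star[of b a c e z] abce by (simp add: chord_swap[of p b a] wgt_swap12[of p b a])
  have star_e: "wgt p a e b c * chord p a e z + wgt p b e a c * chord p b e z + wgt p c e a b
    * chord p c e z = 0"
    using wgt_chord_star[of e a b c z] abce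
    by (simp add: chord_swap[of p e] wgt_swap12[of p e] wgt_swap34[of p _ e] algebra_simps)
  consider "k < b" | "b \<le> k \<and> k < c" | "c \<le> k" by linarith
  then show ?thesis
    by cases (use assms star_a star_b star_e in \<open>simp_all add: quad_chord_comb_def\<close>)
qed

lemma quad_sum_point_of_areas_sorted:
  assumes abce: "a < b" "b < c" "c < e" "e < n"
  shows "quad_sum p (point_of_areas n p x) a b c e = 1"
proof -
  have "(\<Sum>k\<in>{a..<e}. triangle_integral (quad_chord_comb p a b c e k) (p k) (p (Suc k))) = 0"
    using quad_chord_comb_zero[OF abce] by (intro sum.neutral) (simp add: triangle_integral_def)
  moreover have "(\<Sum>k\<in>{a..<e}. quad_chord_comb p a b c e k (p k) * x k) = 0"
    using quad_chord_comb_zero[OF abce] by (intro sum.neutral) simp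
  moreover have "wgt p a b c e * triangle_integral (chord p a b) (p b) (p a)
       + wgt p a c b e * triangle_integral (chord p a c) (p c) (p a)
       + wgt p a e b c * triangle_integral (chord p a e) (p e) (p a)
       + wgt p b c a e * triangle_integral (chord p b c) (p c) (p b)
       + wgt p b e a c * triangle_integral (chord p b e) (p e) (p b)
       + wgt p c e a b * triangle_integral (chord p c e) (p e) (p c) = 1"
    using wgt_square_identity[of "p a" "p b" "p c" "p e"] det3_nonzero abce
    unfolding wgt_def triangle_integral_chord_closing by simp
  ultimately show ?thesis unfolding quad_sum_point_of_areas_expand[OF abce] by simp
qed

lemma quad_rel_point_of_areas: "quad_rel n p 1 (point_of_areas n p x)"
  by (rule quad_rel_if_sorted) (rule quad_sum_point_of_areas_sorted)

end

section \<open>Triangulations of a convex polygon\<close>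

lemma noncrossing_extends_to_triangulation:
  assumes "Z \<subseteq> segs n" "\<forall>s\<in>Z. \<forall>t\<in>Z. noncrossing s t" "\<forall>i<n. {i, Suc i mod n} \<in> Z"
  obtains T where "convex_triangulation n T" "Z \<subseteq> T"
proof -
  define F where "F = {T. Z \<subseteq> T \<and> T \<subseteq> segs n \<and> (\<forall>s\<in>T. \<forall>t\<in>T. noncrossing s t)}"
  have "finite F" unfolding F_def
    by (rule finite_subset[of _ "Pow (segs n)"]) (auto simp: finite_segs)
  moreover have "Z \<in> F" unfolding F_def using assms by blast
  ultimately obtain T where T: "T \<in> F" and T_max: "\<forall>T'\<in>F. card T' \<le> card T"
    using finite_obtain_max[of F Z card] by blast
  then have TF: "Z \<subseteq> T" "T \<subseteq> segs n" "\<forall>s\<in>T. \<forall>t\<in>T. noncrossing s t" unfolding F_def by auto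
  have "convex_triangulation n T" unfolding convex_triangulation_def
  proof (intro conjI ballI allI impI)
    show "\<exists>t\<in>T. \<not> noncrossing s t" if s: "s \<in> segs n" "s \<notin> T" for s
    proof (rule ccontr)
      assume "\<not> (\<exists>t\<in>T. \<not> noncrossing s t)"
      then have "insert s T \<in> F"
        unfolding F_def using TF noncrossing_self[OF s(1)] noncrossing_commute s(1) by auto
      then have "card (insert s T) \<le> card T" using T_max by blast
      moreover have "finite T" using TF(2) finite_segs finite_subset by blast
      ultimately show False using s(2) by simp
    qed
  qed (use TF assms(3) in auto)
  then show ?thesis using that TF(1) by blast
qed

locale ngon_triangulation =
  fixes n :: nat and T :: "nat set set"
  assumes three_le_n: "3 \<le> n" and triangulation: "convex_triangulation n T"
begin

lemma T_subset_segs: "T \<subseteq> segs n"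
  using triangulation unfolding convex_triangulation_def by blast

lemma finite_T: "finite T"
  using T_subset_segs finite_segs finite_subset by blast

lemma edge_in_T: "{i, j} \<in> T \<Longrightarrow> i \<noteq> j \<and> i < n \<and> j < n"
  using T_subset_segs segs_iff by blast

lemma hull_edge: "i < n \<Longrightarrow> {i, Suc i mod n} \<in> T"
  using triangulation unfolding convex_triangulation_def by blast

lemma hull_edge_Suc: "Suc i < n \<Longrightarrow> {i, Suc i} \<in> T"
  using hull_edge[of i] by simp

lemma hull_edge_pred: "i < n \<Longrightarrow> {i, (i + n - 1) mod n} \<in> T"
  using hull_edge[of "(i + n - 1) mod n"] Suc_pred_mod[of i n] by (simp add: insert_commute)

lemma hull_edge_last: "{0, n - 1} \<in> T"
  using hull_edge_pred[of 0] three_le_n by simp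

lemma T_not_cross: "{i, j} \<in> T \<Longrightarrow> {k, l} \<in> T \<Longrightarrow> \<not> chords_cross i j k l"
  using triangulation edge_in_T noncrossing_iff_not_chords_cross
  unfolding convex_triangulation_def by metis

lemma nonedge_crossed:
  assumes "{i, j} \<in> segs n" "{i, j} \<notin> T"
  obtains k l where "{k, l} \<in> T" "chords_cross i j k l"
proof -
  obtain t where t: "t \<in> T" "\<not> noncrossing {i, j} t"
    using assms triangulation unfolding convex_triangulation_def by blast
  then obtain k l where "t = {k, l}" "k < l" using T_subset_segs segsE by blast
  then show ?thesis using that t assms noncrossing_iff_not_chords_cross[of i j k l] segs_iff by auto
qed

lemma fan_consecutive_edge:
  assumes "{x, u} \<in> T" "{x, v} \<in> T" "cyclic_order x u v" and gap: "\<forall>s. {x, s} \<in> T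
    \<longrightarrow> \<not> cyclic_order u s v"
  shows "{u, v} \<in> T"
proof (rule ccontr)
  assume "{u, v} \<notin> T"
  moreover have "{u, v} \<in> segs n"
    using assms edge_in_T cyclic_order_distinct segs_iff by metis
  ultimately obtain k l where kl: "{k, l} \<in> T" "chords_cross u v k l"
    using nonedge_crossed by blast
  have "\<not> chords_cross x u k l" "\<not> chords_cross x v k l"
    using T_not_cross assms kl by auto
  moreover have "k = x \<longrightarrow> \<not> cyclic_order u l v" "l = x \<longrightarrow> \<not> cyclic_order u k v"
    using gap kl(1) by (auto simp: insert_commute)
  ultimately show False using kl(2) assms(3)
    unfolding chords_cross_def cyclic_order_def
    by (simp only: cast_order_to_int distinct.simps list.set insert_iff empty_iff) (smt (verit))
qed

lemma nonedge_fan_triangle: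
  assumes "x < n" "y < n" "x \<noteq> y" "{x, y} \<notin> T"
  obtains u v where "{x, u} \<in> T" "{x, v} \<in> T" "{u, v} \<in> T" "cyclic_order x u y" "cyclic_order x y v"
    "\<forall>s. {x, s} \<in> T \<longrightarrow> \<not> cyclic_order u s v"
proof -
  \<comment> \<open>\<open>u\<close> and \<open>v\<close> are the neighbours of \<open>x\<close> closest to \<open>y\<close> on either side\<close>
  define offset where "offset z = (z + n - x) mod n" for z
  define before where "before = {s. {x, s} \<in> T \<and> cyclic_order x s y}"
  define after where "after = {s. {x, s} \<in> T \<and> cyclic_order x y s}"
  have fin: "finite before" "finite after"
    by (rule finite_subset[of _ "{..<n}"], auto simp: before_def after_def dest: edge_in_T)+
  have "Suc x mod n \<in> before"
    using hull_edge[of x] cyclic_order_succ[of x n y] assms by (auto simp: before_def)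
  then obtain u where u: "u \<in> before" "\<forall>s\<in>before. offset s \<le> offset u"
    using finite_obtain_max[OF fin(1)] by blast
  have "(x + n - 1) mod n \<in> after"
    using hull_edge_pred[of x] cyclic_order_pred[of x n y] assms
      by (auto simp: after_def insert_commute)
  then obtain v where v: "v \<in> after" "\<forall>s\<in>after. offset v \<le> offset s"
    using finite_obtain_min[OF fin(2)] by blast
  have xu: "{x, u} \<in> T" "cyclic_order x u y" and xv: "{x, v} \<in> T" "cyclic_order x y v"
    using u v unfolding before_def after_def by auto
  have gap: "\<not> cyclic_order u s v" if s: "{x, s} \<in> T" for s
  proof
    assume usv: "cyclic_order u s v"
    have "s \<noteq> y" "s \<noteq> x" "s < n" using s assms(4) edge_in_T by auto
    then consider "cyclic_order x s y" | "cyclic_order x y s"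
      using cyclic_order_cases[of x s y] assms(3) by auto
    then show False
    proof cases
      case 1
      have "cyclic_order x u s" using xu xv usv 1
        unfolding cyclic_order_def by (simp only: cast_order_to_int) (smt (verit))
      then have "offset u < offset s"
        using cyclic_order_iff_offset xu s edge_in_T unfolding offset_def by metis
      then show False using u s 1 unfolding before_def by auto
    next
      case 2
      have "cyclic_order x s v" using xu xv usv 2
        unfolding cyclic_order_def by (simp only: cast_order_to_int) (smt (verit))
      then have "offset s < offset v"
        using cyclic_order_iff_offset xv s edge_in_T unfolding offset_def by metis
      then show False using v s 2 unfolding after_def by auto
    qed
  qed
  have "{u, v} \<in> T"
    using fan_consecutive_edge[OF xu(1) xv(1) cyclic_order_trans[OF xu(2) xv(2)]] gap by blast
  then show ?thesis using that xu xv gap by blast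
qed

lemma fan_triangle_crossers_psubset:
  assumes "x < n" "y < n" "x \<noteq> y" "{x, u} \<in> T" "{x, v} \<in> T" "{u, v} \<in> T"
    "cyclic_order x u y" "cyclic_order x y v" and gap: "\<forall>s. {x, s} \<in> T \<longrightarrow> \<not> cyclic_order u s v"
    and w: "w = u \<or> w = v"
  shows "{t\<in>T. \<not> noncrossing {w, y} t} \<subset> {t\<in>T. \<not> noncrossing {x, y} t}"
proof
  have wy: "w \<noteq> y" using w assms(7,8) cyclic_order_distinct by blast
  show "{t\<in>T. \<not> noncrossing {w, y} t} \<subseteq> {t\<in>T. \<not> noncrossing {x, y} t}"
  proof
    fix t assume t: "t \<in> {t\<in>T. \<not> noncrossing {w, y} t}"
    then obtain k l where kl: "t = {k, l}" "k < l" using T_subset_segs segsE by blast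
    then have "chords_cross w y k l" using t noncrossing_iff_not_chords_cross[of w y k l] wy by auto
    moreover have "\<not> chords_cross x u k l" "\<not> chords_cross x v k l"
      using T_not_cross assms(4,5) t kl by auto
    moreover have "k = x \<longrightarrow> \<not> cyclic_order u l v" "l = x \<longrightarrow> \<not> cyclic_order u k v"
      using gap t kl by (auto simp: insert_commute)
    ultimately have "chords_cross x y k l" using w assms(7,8)
      unfolding chords_cross_def cyclic_order_def
      by (simp only: cast_order_to_int distinct.simps list.set insert_iff empty_iff) (smt (verit))
    then show "t \<in> {t\<in>T. \<not> noncrossing {x, y} t}"
      using t kl noncrossing_iff_not_chords_cross[of x y k l] assms(3) by auto
  qed
  have "chords_cross x y u v" "\<not> chords_cross w y u v"
    using assms(7,8) w cyclic_order_asym cyclic_order_distinct cyclic_order_trans[OF assms(7,8)]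
      unfolding chords_cross_def
    by auto
  moreover have "u \<noteq> v" using cyclic_order_trans[OF assms(7,8)] cyclic_order_distinct by blast
  ultimately show "{t\<in>T. \<not> noncrossing {w, y} t} \<noteq> {t\<in>T. \<not> noncrossing {x, y} t}"
    using noncrossing_iff_not_chords_cross[of x y u v] noncrossing_iff_not_chords_cross[of w y u v]
      assms(3,6) wy by auto
qed

text \<open>Induction over the chords of the polygon, ordered by the number of edges of \<open>T\<close> they cross:
  a chord \<open>x y\<close> that is not an edge is reduced, through the triangle \<open>x u v\<close> of \<open>T\<close> that it
  leaves \<open>x\<close> through, to the chords \<open>u y\<close> and \<open>v y\<close>.\<close>

lemma nonedge_induct [consumes 3, case_names edge fan]:
  assumes "x < n" "y < n" "x \<noteq> y"
    and edge: "\<And>x y. {x, y} \<in> T \<Longrightarrow> P x y"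
    and fan: "\<And>x y u v. x < n \<Longrightarrow> y < n \<Longrightarrow> x \<noteq> y \<Longrightarrow> {x, y} \<notin> T \<Longrightarrow>
      {x, u} \<in> T \<Longrightarrow> {x, v} \<in> T \<Longrightarrow> {u, v} \<in> T \<Longrightarrow> cyclic_order x u y \<Longrightarrow> cyclic_order x y v \<Longrightarrow>
      P u y \<Longrightarrow> P v y \<Longrightarrow> P x y"
  shows "P x y"
  using assms(1-3)
proof (induction "card {t\<in>T. \<not> noncrossing {x, y} t}" arbitrary: x y rule: less_induct)
  case less
  show ?case
  proof (cases "{x, y} \<in> T")
    case False
    then obtain u v where uv: "{x, u} \<in> T" "{x, v} \<in> T" "{u, v} \<in> T" "cyclic_order x u y"
      "cyclic_order x y v"
      "\<forall>s. {x, s} \<in> T \<longrightarrow> \<not> cyclic_order u s v"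
      using nonedge_fan_triangle less.prems by blast
    have "P w y" if "w = u \<or> w = v" for w
    proof (rule less.hyps)
      show "card {t\<in>T. \<not> noncrossing {w, y} t} < card {t\<in>T. \<not> noncrossing {x, y} t}"
        using psubset_card_mono[OF _ fan_triangle_crossers_psubset[OF less.prems uv that]] finite_T
        by simp
      show "w < n" "y < n" "w \<noteq> y"
        using that uv edge_in_T less.prems cyclic_order_distinct by blast+
    qed
    then show ?thesis using fan[OF less.prems False uv(1-5)] by blast
  qed (rule edge)
qed

lemma edge_nested:
  assumes "{i, m} \<in> T" "i < k" "k < m" "{k, l} \<in> T"
  shows "i \<le> l \<and> l \<le> m"
proof (rule ccontr)
  assume "\<not> (i \<le> l \<and> l \<le> m)"
  then have "chords_cross i m k l"
    using assms(2,3) edge_in_T[OF assms(4)] unfolding chords_cross_def cyclic_order_def by auto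
  then show False using T_not_cross assms(1,4) by blast
qed

lemma edge_apex:
  assumes "{i, j} \<in> T" "Suc i < j"
  obtains m where "i < m" "m < j" "{i, m} \<in> T" "{m, j} \<in> T"
proof -
  define S where "S = {s. {i, s} \<in> T \<and> i < s \<and> s < j}"
  have "finite S" unfolding S_def by (rule finite_subset[of _ "{..<j}"]) auto
  moreover have "Suc i \<in> S"
    unfolding S_def using hull_edge_Suc assms edge_in_T[OF assms(1)] by auto
  ultimately obtain m where m: "m \<in> S" "\<forall>s\<in>S. s \<le> m"
    using finite_obtain_max[of S "Suc i" id] by auto
  have "{m, j} \<in> T"
  proof (rule fan_consecutive_edge)
    show "{i, m} \<in> T" "cyclic_order i m j" using m(1) unfolding S_def cyclic_order_def by auto
    show "\<forall>s. {i, s} \<in> T \<longrightarrow> \<not> cyclic_order m s j"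
      using m unfolding S_def cyclic_order_def by force
  qed (rule assms(1))
  then show ?thesis using that m(1) unfolding S_def by blast
qed

end

section \<open>Area vectors\<close>

definition adj_sum :: "(nat \<Rightarrow> nat \<Rightarrow> real) \<Rightarrow> nat list \<Rightarrow> real" where
  "adj_sum f xs = (\<Sum>l<length xs - 1. f (xs ! l) (xs ! Suc l))"

definition adj_sum_set :: "(nat \<Rightarrow> nat \<Rightarrow> real) \<Rightarrow> nat set \<Rightarrow> real" where
  "adj_sum_set f K = adj_sum f (sorted_list_of_set K)"

lemma adj_sum_short: "length xs \<le> 1 \<Longrightarrow> adj_sum f xs = 0"
  unfolding adj_sum_def by simp

lemma adj_sum_Cons2: "adj_sum f (x # y # zs) = f x y + adj_sum f (y # zs)"
  unfolding adj_sum_def by (simp add: sum.lessThan_Suc_shift del: sum.lessThan_Suc)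

lemma adj_sum_append:
  "xs \<noteq> [] \<Longrightarrow> ys \<noteq> [] \<Longrightarrow> adj_sum f (xs @ ys) = adj_sum f xs + f (last xs) (hd ys) + adj_sum f ys"
proof (induction xs rule: induct_list012)
  case (2 x)
  then obtain y ys' where "ys = y # ys'" by (cases ys) auto
  then show ?case by (simp add: adj_sum_Cons2 adj_sum_short)
qed (simp_all add: adj_sum_Cons2)

lemma adj_sum_set_subset_singleton:
  assumes "K \<subseteq> {c}"
  shows "adj_sum_set f K = 0"
proof -
  have "card K \<le> 1" using card_mono[OF _ assms] by simp
  then show ?thesis unfolding adj_sum_set_def by (simp add: adj_sum_short)
qed

lemma adj_sum_set_join:
  assumes "finite K1" "finite K2" "a \<in> K1" "b \<in> K2" "\<forall>x\<in>K1. x \<le> a" "\<forall>y\<in>K2. b \<le> y" "a < b"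
  shows "adj_sum_set f (K1 \<union> K2) = adj_sum_set f K1 + f a b + adj_sum_set f K2"
proof -
  let ?L1 = "sorted_list_of_set K1" and ?L2 = "sorted_list_of_set K2"
  have "sorted_list_of_set (K1 \<union> K2) = ?L1 @ ?L2"
  proof (rule sorted_distinct_set_unique)
    have "\<forall>x\<in>K1. \<forall>y\<in>K2. x < y" using assms(5-7) by fastforce
    then show "sorted (?L1 @ ?L2)" "distinct (?L1 @ ?L2)"
      using assms(1,2) by (auto simp: sorted_append less_imp_le)
  qed (use assms(1,2) in simp_all)
  moreover have "K1 \<noteq> {}" "K2 \<noteq> {}" using assms by auto
  then have "?L1 \<noteq> []" "?L2 \<noteq> []" "last ?L1 = Max K1" "hd ?L2 = Min K2"
    using sorted_list_of_set_last[of K1] sorted_list_of_set_nonempty[of K2] assms by simp_all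
  moreover have "Max K1 = a" "Min K2 = b"
    using assms by (auto intro: Max_eqI Min_eqI)
  ultimately show ?thesis unfolding adj_sum_set_def using adj_sum_append by simp
qed

text \<open>Offsets \<open>q\<close> represent the neighbour \<open>(k + q) mod n\<close> of \<open>k\<close>; sorting them is sorting the
  neighbours in angular order, as in \<^const>\<open>nbr_offsets\<close>.\<close>

definition fan_det :: "nat \<Rightarrow> (nat \<Rightarrow> real \<times> real) \<Rightarrow> nat \<Rightarrow> nat \<Rightarrow> nat \<Rightarrow> real" where
  "fan_det n p k q q' = det3 (p k) (p ((k + q) mod n)) (p ((k + q') mod n))"

definition nbr_offset_set :: "nat \<Rightarrow> nat set set \<Rightarrow> nat \<Rightarrow> nat set" where
  "nbr_offset_set n T k = {q. 0 < q \<and> q < n \<and> {k, (k + q) mod n} \<in> T}"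

definition area_within :: "nat \<Rightarrow> (nat \<Rightarrow> real \<times> real) \<Rightarrow> nat set set \<Rightarrow> nat \<Rightarrow> nat \<Rightarrow> nat \<Rightarrow> real" where
  "area_within n p T i j k
    = adj_sum_set (fan_det n p k) {q \<in> nbr_offset_set n T k. (k + q) mod n \<in> {i..j}}"

lemma AreaT_eq_adj_sum_set: "AreaT n p T k = adj_sum_set (fan_det n p k) (nbr_offset_set n T k)"
  unfolding AreaT_def adj_sum_set_def adj_sum_def fan_det_def nbr_offset_set_def nbr_offsets_def
  by (simp add: Let_def)

lemma finite_nbr_offset_set: "finite (nbr_offset_set n T k)"
  unfolding nbr_offset_set_def by (rule finite_subset[of _ "{..<n}"]) auto

context ngon_triangulation
begin

lemma nbr_offset_set_edge:
  assumes "k < n" "q \<in> nbr_offset_set n T k"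
  shows "{k, (k + q) mod n} \<in> T" "0 < q" "q < n"
  using assms unfolding nbr_offset_set_def by auto

lemma area_within_adjacent:
  assumes "Suc i < n" "k \<in> {i..Suc i}"
  shows "area_within n p T i (Suc i) k = 0"
proof -
  have kn: "k < n" using assms by auto
  have "{q \<in> nbr_offset_set n T k. (k + q) mod n \<in> {i..Suc i}} \<subseteq> {if k = i then 1 else n - 1}"
  proof
    fix q assume q: "q \<in> {q \<in> nbr_offset_set n T k. (k + q) mod n \<in> {i..Suc i}}"
    then have "0 < q" "q < n" unfolding nbr_offset_set_def by auto
    then show "q \<in> {if k = i then 1 else n - 1}"
      using q assms add_mod_eq_if[OF kn \<open>q < n\<close>]
        by (cases "k = i"; cases "k + q < n"; simp; linarith)
  qed
  then show ?thesis unfolding area_within_def by (rule adj_sum_set_subset_singleton)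
qed

lemma area_within_inner:
  assumes "{i, j} \<in> T" "i < k" "k < j"
  shows "area_within n p T i j k = AreaT n p T k"
proof -
  have "k < n" using assms edge_in_T[of i j] by auto
  then have "(k + q) mod n \<in> {i..j}" if "q \<in> nbr_offset_set n T k" for q
    using edge_nested[OF assms] nbr_offset_set_edge(1) that by simp
  then have "{q \<in> nbr_offset_set n T k. (k + q) mod n \<in> {i..j}} = nbr_offset_set n T k" by blast
  then show ?thesis unfolding area_within_def AreaT_eq_adj_sum_set by simp
qed

lemma area_within_full: "area_within n p T 0 (n - 1) k = AreaT n p T k"
proof -
  have "(k + q) mod n \<le> n - 1" for q
    using three_le_n by (simp add: less_Suc_eq_le[symmetric])
  then have "{q \<in> nbr_offset_set n T k. (k + q) mod n \<in> {0..n - 1}} = nbr_offset_set n T k" by auto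
  then show ?thesis unfolding area_within_def AreaT_eq_adj_sum_set by simp
qed

lemma area_within_left:
  assumes "i < m" "m < j" "{i, m} \<in> T" "{m, j} \<in> T" "{i, j} \<in> T"
  shows "area_within n p T i j i = area_within n p T i m i + det3 (p i) (p m) (p j)"
proof -
  have jn: "j < n" using edge_in_T assms(5) by blast
  define K where "K = {q \<in> nbr_offset_set n T i. (i + q) mod n \<in> {i..m}}"
  have no_wrap: "(i + q) mod n = i + q" if "q \<in> nbr_offset_set n T i" "i \<le> (i + q) mod n" for q
    using that add_mod_eq_if[of i n q] nbr_offset_set_edge[of i q] jn assms(1,2)
    by (auto split: if_splits)
  have K_le: "q \<le> m - i" if "q \<in> K" for q
    using that no_wrap[of q] unfolding K_def by auto
  have "{q \<in> nbr_offset_set n T i. (i + q) mod n \<in> {i..j}} = K \<union> {j - i}"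
  proof (intro set_eqI iffI)
    fix q assume q: "q \<in> {q \<in> nbr_offset_set n T i. (i + q) mod n \<in> {i..j}}"
    then have "(i + q) mod n = i + q" using no_wrap by auto
    moreover have "{i, (i + q) mod n} \<in> T"
      using q nbr_offset_set_edge(1)[of i q] jn assms by auto
    ultimately have "\<not> chords_cross m j i (i + q)" using T_not_cross[OF assms(4)] by simp
    then have "\<not> (m < i + q \<and> i + q < j)"
      using assms(1,2) unfolding chords_cross_def cyclic_order_def by auto
    then show "q \<in> K \<union> {j - i}" using q \<open>(i + q) mod n = i + q\<close> unfolding K_def by auto
  qed (use assms jn in \<open>auto simp: K_def nbr_offset_set_def\<close>)
  moreover have "adj_sum_set (fan_det n p i) (K \<union> {j - i})
      = adj_sum_set (fan_det n p i) K + fan_det n p i (m - i) (j - i)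
        + adj_sum_set (fan_det n p i) {j - i}"
    by (rule adj_sum_set_join)
      (use K_le assms jn in \<open>auto simp: K_def nbr_offset_set_def finite_nbr_offset_set\<close>)
  ultimately show ?thesis
    unfolding area_within_def K_def[symmetric] using assms jn
    by (simp add: fan_det_def adj_sum_set_subset_singleton)
qed

lemma area_within_right:
  assumes "i < m" "m < j" "{i, m} \<in> T" "{m, j} \<in> T" "{i, j} \<in> T"
  shows "area_within n p T i j j = area_within n p T m j j + det3 (p i) (p m) (p j)"
proof -
  have jn: "j < n" using edge_in_T assms(5) by blast
  define K where "K = {q \<in> nbr_offset_set n T j. (j + q) mod n \<in> {m..j}}"
  have wrap: "\<not> j + q < n \<and> (j + q) mod n = j + q - n"
    if "q \<in> nbr_offset_set n T j" "(j + q) mod n \<le> j" for q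
    using that add_mod_eq_if[OF jn, of q] nbr_offset_set_edge[OF jn that(1)]
      by (auto split: if_splits)
  have K_ge: "n - j + m \<le> q" if "q \<in> K" for q
    using that wrap[of q] jn unfolding K_def by auto
  have target: "(j + (n - j + l)) mod n = l" if "l < n" for l
    using jn that by simp
  have "{q \<in> nbr_offset_set n T j. (j + q) mod n \<in> {i..j}} = {n - j + i} \<union> K"
  proof (intro set_eqI iffI)
    fix q assume q: "q \<in> {q \<in> nbr_offset_set n T j. (j + q) mod n \<in> {i..j}}"
    then have w: "\<not> j + q < n" "(j + q) mod n = j + q - n" using wrap by auto
    have "{j, (j + q) mod n} \<in> T" "q < n" using q nbr_offset_set_edge[OF jn] by auto
    then have "\<not> chords_cross i m j (j + q - n)" using T_not_cross[OF assms(3)] w by simp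
    then have "\<not> (i < j + q - n \<and> j + q - n < m)"
      using assms(1,2) unfolding chords_cross_def cyclic_order_def by auto
    then show "q \<in> {n - j + i} \<union> K" using q w \<open>q < n\<close> jn unfolding K_def by (auto; arith)
  qed (use assms jn target in \<open>auto simp: K_def nbr_offset_set_def insert_commute\<close>)
  moreover have "adj_sum_set (fan_det n p j) ({n - j + i} \<union> K)
    = adj_sum_set (fan_det n p j) {n - j + i}
      + fan_det n p j (n - j + i) (n - j + m) + adj_sum_set (fan_det n p j) K"
    by (rule adj_sum_set_join)
      (use K_ge assms jn target in \<open>auto simp: K_def nbr_offset_set_def finite_nbr_offset_set
        insert_commute\<close>)
  moreover have "fan_det n p j (n - j + i) (n - j + m) = det3 (p i) (p m) (p j)"
    unfolding fan_det_def
      using target[of i] target[of m] assms jn det3_rotate[of "p i"] det3_rotate[of "p m"]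
    by simp
  ultimately show ?thesis
    unfolding area_within_def K_def[symmetric] by (simp add: adj_sum_set_subset_singleton)
qed

lemma area_within_apex:
  assumes "i < m" "m < j" "{i, m} \<in> T" "{m, j} \<in> T" "{i, j} \<in> T"
  shows "area_within n p T i j m = area_within n p T m j m + area_within n p T i m m
    + det3 (p i) (p m) (p j)"
proof -
  have jn: "j < n" using edge_in_T assms(5) by blast
  then have mn: "m < n" using assms by simp
  define K1 where "K1 = {q \<in> nbr_offset_set n T m. (m + q) mod n \<in> {m..j}}"
  define K2 where "K2 = {q \<in> nbr_offset_set n T m. (m + q) mod n \<in> {i..m}}"
  have target: "(m + (n - m + i)) mod n = i" using mn assms by simp
  have "{q \<in> nbr_offset_set n T m. (m + q) mod n \<in> {i..j}} = K1 \<union> K2"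
    unfolding K1_def K2_def using assms by auto
  moreover have "adj_sum_set (fan_det n p m) (K1 \<union> K2)
      = adj_sum_set (fan_det n p m) K1 + fan_det n p m (j - m) (n - m + i)
        + adj_sum_set (fan_det n p m) K2"
  proof (rule adj_sum_set_join)
    show "\<forall>q\<in>K1. q \<le> j - m"
    proof
      fix q assume "q \<in> K1"
      then have "q \<in> nbr_offset_set n T m" "(m + q) mod n \<in> {m..j}" unfolding K1_def by auto
      moreover have "q < n" using nbr_offset_set_edge[OF mn] calculation(1) by auto
      ultimately show "q \<le> j - m" using add_mod_eq_if[OF mn, of q] by (auto split: if_splits; arith)
    qed
    show "\<forall>q\<in>K2. n - m + i \<le> q"
    proof
      fix q assume "q \<in> K2"
      then have "q \<in> nbr_offset_set n T m" "(m + q) mod n \<in> {i..m}" unfolding K2_def by auto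
      moreover have "q < n" "0 < q" using nbr_offset_set_edge[OF mn] calculation(1) by auto
      ultimately show "n - m + i \<le> q" using add_mod_eq_if[OF mn, of q] mn
        by (auto split: if_splits; arith)
    qed
  qed (use assms jn mn target in \<open>auto simp: K1_def K2_def nbr_offset_set_def
    finite_nbr_offset_set insert_commute\<close>)
  moreover have "fan_det n p m (j - m) (n - m + i) = det3 (p i) (p m) (p j)"
    unfolding fan_det_def using target assms jn det3_rotate[of "p i"] det3_rotate[of "p m"] by simp
  ultimately show ?thesis unfolding area_within_def K1_def[symmetric] K2_def[symmetric] by simp
qed

lemma sum_area_within_split:
  assumes "i < m" "m < j" "{i, m} \<in> T" "{m, j} \<in> T" "{i, j} \<in> T"
  shows "(\<Sum>k\<in>{i..j}. g (p k) * area_within n p T i j k)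
    = (\<Sum>k\<in>{i..m}. g (p k) * area_within n p T i m k)
      + (\<Sum>k\<in>{m..j}. g (p k) * area_within n p T m j k)
      + det3 (p i) (p m) (p j) * (g (p i) + g (p m) + g (p j))"
proof -
  define D where "D = det3 (p i) (p m) (p j)"
  have pointwise: "g (p k) * area_within n p T i j k
     = of_bool (i \<le> k \<and> k \<le> m) * (g (p k) * area_within n p T i m k)
     + of_bool (m \<le> k \<and> k \<le> j) * (g (p k) * area_within n p T m j k)
     + (of_bool (k = i) * (D * g (p k)) + of_bool (k = m) * (D * g (p k))
       + of_bool (k = j) * (D * g (p k)))"
    if k: "k \<in> {i..j}" for k
  proof -
    consider "k = i" | "i < k \<and> k < m" | "k = m" | "m < k \<and> k < j" | "k = j" using k assms
      by fastforce
    then show ?thesis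
    proof cases
      case 1 then show ?thesis using assms area_within_left[OF assms] unfolding D_def
        by (simp add: algebra_simps)
    next
      case 2 then show ?thesis using assms area_within_inner[of i j k] area_within_inner[of i m k]
        by simp
    next
      case 3 then show ?thesis using assms area_within_apex[OF assms] unfolding D_def
        by (simp add: algebra_simps)
    next
      case 4 then show ?thesis using assms area_within_inner[of i j k] area_within_inner[of m j k]
        by simp
    next
      case 5 then show ?thesis using assms area_within_right[OF assms] unfolding D_def
        by (simp add: algebra_simps)
    qed
  qed
  have "(\<Sum>k\<in>{i..j}. g (p k) * area_within n p T i j k) =
     (\<Sum>k\<in>{i..j}. of_bool (i \<le> k \<and> k \<le> m) * (g (p k) * area_within n p T i m k))
     + (\<Sum>k\<in>{i..j}. of_bool (m \<le> k \<and> k \<le> j) * (g (p k) * area_within n p T m j k))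
     + ((\<Sum>k\<in>{i..j}. of_bool (k = i) * (D * g (p k))) + (\<Sum>k\<in>{i..j}. of_bool (k = m) * (D * g (p k)))
       + (\<Sum>k\<in>{i..j}. of_bool (k = j) * (D * g (p k))))"
    by (simp only: sum.distrib[symmetric] pointwise cong: sum.cong)
  also have "\<dots> = (\<Sum>k\<in>{i..m}. g (p k) * area_within n p T i m k)
    + (\<Sum>k\<in>{m..j}. g (p k) * area_within n p T m j k)
      + (D * g (p i) + D * g (p m) + D * g (p j))"
    using assms
      by (simp only: sum_atLeastAtMost_restrict[symmetric] less_imp_le order_refl sum_of_bool_eq
        atLeastAtMost_iff finite_atLeastAtMost)
  finally show ?thesis unfolding D_def by (simp add: algebra_simps)
qed

lemma sum_area_within_eq_polygon_integral:
  assumes "{i, j} \<in> T" "i < j" "affine_fun g"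
  shows "(\<Sum>k\<in>{i..j}. g (p k) * area_within n p T i j k) = polygon_integral p g i j"
  using assms(1,2)
proof (induction "j - i" arbitrary: i j rule: less_induct)
  case less
  show ?case
  proof (cases "j = Suc i")
    case True
    then show ?thesis using area_within_adjacent[of i] edge_in_T[OF less.prems(1)] by simp
  next
    case False
    then obtain m where m: "i < m" "m < j" "{i, m} \<in> T" "{m, j} \<in> T"
      using edge_apex less.prems by (metis Suc_lessI)
    show ?thesis
      using sum_area_within_split[OF m less.prems(1)] less.hyps[of m i] less.hyps[of j m] m
        polygon_integral_split[of i m j g p] assms(3) by simp
  qed
qed

lemma sum_AreaT_eq_polygon_integral:
  assumes "affine_fun g"
  shows "(\<Sum>k<n. g (p k) * AreaT n p T k) = polygon_integral p g 0 (n - 1)"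
proof -
  have "{..<n} = {0..n - 1}" using three_le_n by auto
  then have "(\<Sum>k<n. g (p k) * AreaT n p T k)
    = (\<Sum>k\<in>{0..n - 1}. g (p k) * area_within n p T 0 (n - 1) k)"
    by (simp only: area_within_full)
  also have "\<dots> = polygon_integral p g 0 (n - 1)"
    by (rule sum_area_within_eq_polygon_integral[OF hull_edge_last _ assms])
      (use three_le_n in simp)
  finally show ?thesis .
qed

end

section \<open>The vertex of \<open>Y\<close> of a triangulation\<close>

text \<open>Linear conditions satisfied by every area vector (\<open>sum_AreaT_eq_polygon_integral\<close>); on
  vectors satisfying them, \<^const>\<open>point_of_areas\<close> is a right inverse of \<^const>\<open>amap\<close>.\<close>

definition balanced :: "nat \<Rightarrow> (nat \<Rightarrow> real \<times> real) \<Rightarrow> (nat \<Rightarrow> real) \<Rightarrow> bool" where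
  "balanced n p a \<longleftrightarrow> (\<forall>g. affine_fun g \<longrightarrow> (\<Sum>k<n. g (p k) * a k) = polygon_integral p g 0 (n - 1))"

lemma coord_of_areas_first:
  assumes "balanced n p a" "3 \<le> n"
  shows "coord_of_areas p a 1 (n - 1)
    = det3 (p (n - 1)) (p 0) (p 1) ^ 2 - det3 (p (n - 1)) (p 0) (p 1) * a 0"
proof -
  define h where "h = chord p 1 (n - 1)"
  define D where "D = det3 (p (n - 1)) (p 0) (p 1)"
  have "h (p 0) = - D"
    unfolding h_def D_def chord_def using det3_swap12[of "p 1" "p 0"] det3_rotate[of "p (n - 1)"]
      by simp
  have "{..<n} = insert 0 (insert 1 (insert (n - 1) {1<..<n - 1}))" using assms(2) by auto
  then have "(\<Sum>k<n. h (p k) * a k) = h (p 0) * a 0 + (\<Sum>k\<in>{1<..<n - 1}. h (p k) * a k)"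
    using assms(2) by (simp add: h_def)
  moreover have "(\<Sum>k<n. h (p k) * a k) = polygon_integral p h 0 (n - 1)"
    using assms(1) affine_fun_chord unfolding balanced_def h_def by blast
  moreover have "polygon_integral p h 0 (n - 1) = polygon_integral p h 1 (n - 1) + D * h (p 0)"
    using polygon_integral_split[of 0 1 "n - 1" h p] affine_fun_chord assms(2)
      det3_rotate[of "p (n - 1)" "p 0" "p 1"]
    unfolding h_def D_def by (simp add: chord_def)
  ultimately have "coord_of_areas p a 1 (n - 1) = - D * h (p 0) + h (p 0) * a 0"
    unfolding coord_of_areas_def h_def[symmetric] by linarith
  then show ?thesis unfolding \<open>h (p 0) = - D\<close> D_def by (simp add: power2_eq_square)
qed

lemma coord_of_areas_last:
  assumes "balanced n p a" "3 \<le> n"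
  shows "coord_of_areas p a 0 (n - 2)
    = det3 (p (n - 2)) (p (n - 1)) (p 0) ^ 2 - det3 (p (n - 2)) (p (n - 1)) (p 0) * a (n - 1)"
proof -
  define h where "h = chord p 0 (n - 2)"
  define D where "D = det3 (p (n - 2)) (p (n - 1)) (p 0)"
  have n1: "n - 1 = Suc (n - 2)" using assms(2) by simp
  have "h (p (n - 1)) = - D"
    unfolding h_def D_def chord_def using det3_swap23[of "p 0" "p (n - 2)"] det3_rotate[of "p 0"]
      by simp
  have "{..<n} = insert (n - 1) (insert 0 (insert (n - 2) {0<..<n - 2}))"
    and "n - 1 \<notin> insert 0 (insert (n - 2) {0<..<n - 2})" "0 \<notin> insert (n - 2) {0<..<n - 2}"
    using assms(2) by auto
  then have "(\<Sum>k<n. h (p k) * a k) = h (p (n - 1)) * a (n - 1) + (\<Sum>k\<in>{0<..<n - 2}. h (p k) * a k)"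
    by (simp add: h_def)
  moreover have "(\<Sum>k<n. h (p k) * a k) = polygon_integral p h 0 (n - 1)"
    using assms(1) affine_fun_chord unfolding balanced_def h_def by blast
  moreover have
    "polygon_integral p h 0 (n - 1) = polygon_integral p h 0 (n - 2) + D * h (p (n - 1))"
    using polygon_integral_split[of 0 "n - 2" "n - 1" h p] affine_fun_chord assms(2)
      det3_rotate[of "p 0"]
    unfolding h_def D_def n1 by (simp add: chord_def)
  ultimately have "coord_of_areas p a 0 (n - 2) = - D * h (p (n - 1)) + h (p (n - 1)) * a (n - 1)"
    unfolding coord_of_areas_def h_def[symmetric] by linarith
  then show ?thesis unfolding \<open>h (p (n - 1)) = - D\<close> D_def by (simp add: power2_eq_square)
qed

lemma amap_at:
  "i < n \<Longrightarrow> amap n p d i = - d {(i + n - 1) mod n, Suc i mod n}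
    / det3 (p ((i + n - 1) mod n)) (p i) (p (Suc i mod n))
     + det3 (p ((i + n - 1) mod n)) (p i) (p (Suc i mod n))"
  unfolding amap_def by (simp add: Let_def)

lemma amap_out: "\<not> i < n \<Longrightarrow> amap n p d i = 0"
  unfolding amap_def by simp

lemma (in convex_polygon) amap_antimono:
  assumes "\<forall>s\<in>segs n. d s \<le> d' s" "i < n"
  shows "amap n p d' i \<le> amap n p d i"
proof -
  define D where "D = det3 (p ((i + n - 1) mod n)) (p i) (p (Suc i mod n))"
  have "D > 0" unfolding D_def
    using det3_pos cyclic_order_pred_succ[OF three_le_n assms(2)] assms(2) by simp
  have "{(i + n - 1) mod n, Suc i mod n} \<in> segs n"
    using pred_ne_succ[OF three_le_n assms(2)] assms(2) by (simp add: segs_iff)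
  then have "- d' {(i + n - 1) mod n, Suc i mod n} / D \<le> - d {(i + n - 1) mod n, Suc i mod n} / D"
    using assms(1) \<open>D > 0\<close> by (simp add: divide_right_mono)
  then show ?thesis unfolding amap_at[OF assms(2)] D_def[symmetric] by simp
qed

lemma (in convex_polygon) amap_point_of_areas:
  assumes "balanced n p a" "i < n"
  shows "amap n p (point_of_areas n p a) i = a i"
proof -
  define D where "D = det3 (p ((i + n - 1) mod n)) (p i) (p (Suc i mod n))"
  have "D > 0" unfolding D_def
    using det3_pos cyclic_order_pred_succ[OF three_le_n assms(2)] assms(2) by simp
  have "point_of_areas n p a {(i + n - 1) mod n, Suc i mod n} = D^2 - D * a i"
  proof -
    consider "i = 0" | "0 < i \<and> Suc i < n" | "Suc i = n" using assms(2) by linarith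
    then show ?thesis
    proof cases
      case 1
      then have "{(i + n - 1) mod n, Suc i mod n} = {1, n - 1}" using three_le_n by auto
      then show ?thesis unfolding D_def using 1 three_le_n coord_of_areas_first[OF assms(1)]
        by (simp add: point_of_areas_pair)
    next
      case 2
      then obtain i' where "i = Suc i'" using not0_implies_Suc by blast
      then show ?thesis unfolding D_def using 2
        by (simp add: point_of_areas_pair coord_of_areas_ear insert_commute)
    next
      case 3
      obtain k where k: "n = k + 3" using three_le_n by (metis add.commute le_iff_add)
      then have "i + n - 1 = Suc k + n" "Suc k < n" "n - 2 = Suc k" using 3 by simp_all
      then have "(i + n - 1) mod n = n - 2" by (simp only: mod_add_self2 mod_less)
      moreover have "Suc i mod n = 0" "i = n - 1" using 3 by simp_all
      ultimately show ?thesis unfolding D_def using three_le_n coord_of_areas_last[OF assms(1)]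
        by (simp add: point_of_areas_pair insert_commute)
    qed
  qed
  then show ?thesis using \<open>D > 0\<close> assms(2) unfolding amap_at[OF assms(2)] D_def[symmetric]
    by (simp add: power2_eq_square field_simps)
qed

locale triangulated_polygon = convex_polygon +
  fixes T :: "nat set set"
  assumes triangulation: "convex_triangulation n T"

sublocale triangulated_polygon \<subseteq> ngon_triangulation n T
  using three_le_n triangulation by unfold_locales

definition triangulation_point :: "nat \<Rightarrow> (nat \<Rightarrow> real \<times> real) \<Rightarrow> nat set set \<Rightarrow> nat set \<Rightarrow> real" where
  "triangulation_point n p T = point_of_areas n p (area_vec n p T)"

context triangulated_polygon
begin

lemma balanced_area_vec: "balanced n p (area_vec n p T)"
  unfolding balanced_def area_vec_def using sum_AreaT_eq_polygon_integral by simp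

lemma coord_of_areas_edge:
  assumes "{i, j} \<in> T" "i < j"
  shows "coord_of_areas p (area_vec n p T) i j = 0"
proof -
  have "j < n" using edge_in_T assms by auto
  have "{i..j} = insert i (insert j {i<..<j})" using assms by auto
  then have "polygon_integral p (chord p i j) i j
    = (\<Sum>k\<in>{i<..<j}. chord p i j (p k) * area_within n p T i j k)"
    using sum_area_within_eq_polygon_integral[OF assms affine_fun_chord[of p i j], where p = p]
      assms by simp
  also have "\<dots> = (\<Sum>k\<in>{i<..<j}. chord p i j (p k) * area_vec n p T k)"
    using area_within_inner[OF assms(1)] \<open>j < n\<close> unfolding area_vec_def by (intro sum.cong) auto
  finally show ?thesis unfolding coord_of_areas_def by simp
qed

lemma triangulation_point_zero_on_T: "s \<in> T \<Longrightarrow> triangulation_point n p T s = 0"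
  using T_subset_segs coord_of_areas_edge
    by (fastforce simp: triangulation_point_def point_of_areas_pair elim: segsE)

lemma amap_triangulation_point: "amap n p (triangulation_point n p T) = area_vec n p T"
proof
  fix i show "amap n p (triangulation_point n p T) i = area_vec n p T i"
    using amap_point_of_areas[OF balanced_area_vec] unfolding triangulation_point_def
    by (cases "i < n") (simp_all add: amap_out area_vec_def)
qed

lemma fan_wgt_signs:
  assumes "x < n" "y < n" "u < n" "v < n" "cyclic_order x u y" "cyclic_order x y v"
  shows "wgt p x y u v < 0" "wgt p y u x v > 0" "wgt p y v x u > 0"
proof -
  have c: "cyclic_order y x u" "cyclic_order y v u" "cyclic_order y v x" using assms(5,6)
    unfolding cyclic_order_def by (simp_all only: cast_order_to_int) (smt (verit))+
  show "wgt p x y u v < 0" "wgt p y u x v > 0" "wgt p y v x u > 0"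
    unfolding wgt_def using det3_neg det3_pos assms c
    by (auto simp: mult_neg_pos mult_neg_neg mult_pos_pos)
qed

text \<open>In a fan triangle \<open>x u v\<close> of \<open>T\<close>, the relation of the quadruple \<open>x y u v\<close> expresses
  \<open>d {x, y}\<close> through \<open>d {u, y}\<close> and \<open>d {v, y}\<close>, with weights whose signs propagate
  nonpositivity.\<close>

lemma quad_rel_zero_on_T_nonpos:
  assumes "quad_rel n p \<kappa> d" "0 \<le> \<kappa>" "\<forall>s\<in>T. d s = 0" and "x < n" "y < n" "x \<noteq> y"
  shows "d {x, y} \<le> 0"
  using assms(4-6)
proof (induction rule: nonedge_induct)
  case (edge x y)
  then show ?case using assms(3) by simp
next
  case (fan x y u v)
  have "u < n" "v < n" using fan edge_in_T by blast+
  moreover have "distinct [x, y, u, v]"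
    using fan cyclic_order_distinct cyclic_order_trans[OF fan(8,9)] by auto
  ultimately have "quad_sum p d x y u v = \<kappa>" using assms(1) fan unfolding quad_rel_def by blast
  then have "wgt p x y u v * d {x, y} + wgt p y u x v * d {u, y} + wgt p y v x u * d {v, y} = \<kappa>"
    using assms(3) fan unfolding quad_sum_def by (simp add: insert_commute)
  moreover have "wgt p y u x v * d {u, y} \<le> 0" "wgt p y v x u * d {v, y} \<le> 0"
    using fan_wgt_signs[OF fan(1,2) \<open>u < n\<close> \<open>v < n\<close> fan(8,9)] fan.IH
    by (simp_all add: mult_nonneg_nonpos)
  ultimately have "wgt p x y u v * d {x, y} \<ge> 0" using assms(2) by linarith
  then show ?case
    using fan_wgt_signs[OF fan(1,2) \<open>u < n\<close> \<open>v < n\<close> fan(8,9)] by (simp add: zero_le_mult_iff)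
qed

lemma quad_rel_zero_on_T_unique:
  assumes "quad_rel n p 1 d" "quad_rel n p 1 d'" "\<forall>s\<in>T. d s = 0" "\<forall>s\<in>T. d' s = 0"
    and "x < n" "y < n" "x \<noteq> y"
  shows "d {x, y} = d' {x, y}"
proof -
  have diff: "quad_rel n p 0 (\<lambda>s. 1 * e s + (- 1) * e' s)"
    if "quad_rel n p 1 e" "quad_rel n p 1 e'" for e e'
    using that unfolding quad_rel_def quad_sum_lincomb by simp
  have "1 * d {x, y} + (- 1) * d' {x, y} \<le> 0"
    by (rule quad_rel_zero_on_T_nonpos[OF diff[OF assms(1,2)]]) (use assms in simp_all)
  moreover have "1 * d' {x, y} + (- 1) * d {x, y} \<le> 0"
    by (rule quad_rel_zero_on_T_nonpos[OF diff[OF assms(2,1)]]) (use assms in simp_all)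
  ultimately show ?thesis by simp
qed

lemma triangulation_point_in_Yface: "triangulation_point n p T \<in> Yface n p"
proof -
  have "quad_rel n p 1 (triangulation_point n p T)"
    unfolding triangulation_point_def by (rule quad_rel_point_of_areas)
  then have "triangulation_point n p T s \<le> 0" if "s \<in> segs n" for s
    using that triangulation_point_zero_on_T quad_rel_zero_on_T_nonpos[of 1]
      by (fastforce elim: segsE)
  then have "triangulation_point n p T \<in> Yset n p"
    unfolding Yset_iff using \<open>quad_rel n p 1 (triangulation_point n p T)\<close>
      by (simp add: triangulation_point_def point_of_areas_def)
  then show ?thesis unfolding Yface_def using triangulation_point_zero_on_T hull_edge by blast
qed

lemma amap_eq_area_vec:
  assumes "d \<in> Yset n p" "\<forall>s\<in>T. d s = 0"
  shows "amap n p d = area_vec n p T"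
proof
  fix i
  show "amap n p d i = area_vec n p T i"
  proof (cases "i < n")
    case True
    have "quad_rel n p 1 d" "quad_rel n p 1 (triangulation_point n p T)"
      using assms(1) triangulation_point_in_Yface unfolding Yface_def Yset_iff by auto
    then have "d {(i + n - 1) mod n, Suc i mod n}
      = triangulation_point n p T {(i + n - 1) mod n, Suc i mod n}"
      using quad_rel_zero_on_T_unique assms(2) triangulation_point_zero_on_T
        pred_ne_succ[OF three_le_n True] True
      by simp
    then show ?thesis using amap_triangulation_point True by (metis amap_at)
  qed (simp add: amap_out area_vec_def)
qed

end

section \<open>The maximal bounded face\<close>

context convex_polygon
begin

lemma coord_eq_coord_of_amap:
  assumes quad: "quad_rel n p 1 d" and hull: "\<forall>i<n. d {i, Suc i mod n} = 0"
  shows "i < j \<Longrightarrow> j < n \<Longrightarrow> d {i, j} = coord_of_areas p (amap n p d) i j"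
proof (induction "j - i" arbitrary: i j rule: less_induct)
  case less
  have hull_Suc: "d {k, Suc k} = 0" if "Suc k < n" for k
    using hull that by (metis Suc_lessD mod_less)
  consider "j = Suc i" | "j = Suc (Suc i)" | "Suc (Suc i) < j" using less.prems by linarith
  then show ?case
  proof cases
    case 1
    then show ?thesis using hull_Suc less.prems by simp
  next
    case 2
    define D where "D = det3 (p i) (p (Suc i)) (p (Suc (Suc i)))"
    have "D > 0" unfolding D_def using det3_pos less.prems 2 unfolding cyclic_order_def by simp
    have "amap n p d (Suc i) = - d {i, Suc (Suc i)} / D + D"
      unfolding D_def using amap_at[of "Suc i" n p d] less.prems 2 by simp
    then have "d {i, Suc (Suc i)} = D^2 - D * amap n p d (Suc i)"
      using \<open>D > 0\<close> by (simp add: field_simps power2_eq_square)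
    then show ?thesis unfolding 2 coord_of_areas_ear D_def by simp
  next
    case 3
    \<comment> \<open>the relation of \<open>i, i + 1, j - 1, j\<close> determines \<open>d {i, j}\<close> from five shorter chords\<close>
    define d' where "d' = point_of_areas n p (amap n p d)"
    have d'_pair: "d' {x, y} = coord_of_areas p (amap n p d) x y" if "x < y" "y < n" for x y
      unfolding d'_def using point_of_areas_pair[OF that] .
    have quad': "quad_rel n p 1 d'" unfolding d'_def by (rule quad_rel_point_of_areas)
    have "distinct [i, Suc i, j - 1, j]" using 3 by auto
    then have "quad_sum p d i (Suc i) (j - 1) j = quad_sum p d' i (Suc i) (j - 1) j"
      using quad quad' less.prems unfolding quad_rel_def by auto
    moreover have "d {x, y} = d' {x, y}"
      if "{x, y} \<in> {{i, Suc i}, {i, j - 1}, {Suc i, j - 1}, {Suc i, j}, {j - 1, j}}" "x < y" for x y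
    proof -
      have "y < n" "x < y" using that less.prems 3 by (auto simp: doubleton_eq_iff)
      moreover have "y - x < j - i" using that less.prems 3 by (auto simp: doubleton_eq_iff)
      ultimately show ?thesis using less.hyps d'_pair by simp
    qed
    then have "d {i, Suc i} = d' {i, Suc i}" "d {i, j - 1} = d' {i, j - 1}"
      "d {Suc i, j - 1} = d' {Suc i, j - 1}" "d {Suc i, j} = d' {Suc i, j}"
      "d {j - 1, j} = d' {j - 1, j}"
      using 3 by auto
    ultimately have "wgt p i j (Suc i) (j - 1) * d {i, j} = wgt p i j (Suc i) (j - 1) * d' {i, j}"
      unfolding quad_sum_def by simp
    moreover have "wgt p i j (Suc i) (j - 1) \<noteq> 0"
      unfolding wgt_def using det3_nonzero \<open>distinct [i, Suc i, j - 1, j]\<close> less.prems by auto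
    ultimately show ?thesis using d'_pair less.prems by simp
  qed
qed

lemma Yface_eq_point_of_areas:
  assumes "d \<in> Yface n p"
  shows "d = point_of_areas n p (amap n p d)"
proof
  fix s
  have "quad_rel n p 1 d" "\<forall>i<n. d {i, Suc i mod n} = 0" "\<forall>s. s \<notin> segs n \<longrightarrow> d s = 0"
    using assms unfolding Yface_def Yset_iff by auto
  then show "d s = point_of_areas n p (amap n p d) s"
    using coord_eq_coord_of_amap
      by (cases "s \<in> segs n") (auto simp: point_of_areas_def elim!: segsE)
qed

lemma Yset_diagonals_not_both_zero:
  assumes "d \<in> Yset n p" "a < b" "b < c" "c < e" "e < n"
  shows "\<not> (d {a, c} = 0 \<and> d {b, e} = 0)"
proof
  assume "d {a, c} = 0 \<and> d {b, e} = 0"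
  then have "d {a, c} = 0" "d {b, e} = 0" by simp_all
  have "quad_sum p d a b c e = 1" using assms unfolding Yset_iff quad_rel_def by auto
  then have "wgt p a b c e * d {a, b} + wgt p a e b c * d {a, e} + wgt p b c a e * d {b, c}
      + wgt p c e a b * d {c, e} = 1"
    unfolding quad_sum_def using \<open>d {a, c} = 0\<close> \<open>d {b, e} = 0\<close> by simp
  moreover have "wgt p a b c e > 0" "wgt p a e b c > 0" "wgt p b c a e > 0" "wgt p c e a b > 0"
    using assms(2-5) by (auto intro!: wgt_pos_same_side simp: cyclic_order_def)
  moreover have "d {a, b} \<le> 0" "d {a, e} \<le> 0" "d {b, c} \<le> 0" "d {c, e} \<le> 0"
    using assms unfolding Yset_iff by (auto simp: segs_iff)
  ultimately show False by (smt (verit) mult_nonneg_nonpos)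
qed

lemma Yset_zeros_noncrossing:
  assumes "d \<in> Yset n p" "s \<in> segs n" "d s = 0" "t \<in> segs n" "d t = 0"
  shows "noncrossing s t"
proof -
  have "\<not> crossing s t" if "s \<in> segs n" "d s = 0" "t \<in> segs n" "d t = 0" for s t
  proof
    assume "crossing s t"
    then obtain a b c e where "s = {a, b}" "t = {c, e}" "a < c" "c < b" "b < e"
      unfolding crossing_def by blast
    moreover have "e < n" using that calculation by (auto simp: segs_iff)
    ultimately show False using Yset_diagonals_not_both_zero[OF assms(1), of a c b e] that by simp
  qed
  then show ?thesis unfolding noncrossing_def using assms by blast
qed

end

lemma amap_lincomb:
  "amap n p (\<lambda>s. t * d s + (1 - t) * d' s) = (\<lambda>i. t * amap n p d i + (1 - t) * amap n p d' i)"
proof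
  fix i
  show "amap n p (\<lambda>s. t * d s + (1 - t) * d' s) i = t * amap n p d i + (1 - t) * amap n p d' i"
  proof (cases "i < n")
    case True
    define D where "D = det3 (p ((i + n - 1) mod n)) (p i) (p (Suc i mod n))"
    have "- (t * x + (1 - t) * y) / D + D = t * (- x / D + D) + (1 - t) * (- y / D + D)" for x y
      by (cases "D = 0") (simp_all add: field_simps)
    then show ?thesis using True unfolding amap_at[OF True] D_def by simp
  qed (simp add: amap_out)
qed

lemma Yface_lincomb:
  assumes "d \<in> Yface n p" "d' \<in> Yface n p" "\<forall>s\<in>segs n. t * d s + (1 - t) * d' s \<le> 0"
  shows "(\<lambda>s. t * d s + (1 - t) * d' s) \<in> Yface n p"
  using assms unfolding Yface_def Yset_iff quad_rel_def by (auto simp: quad_sum_lincomb)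

lemma (in triangulated_polygon) Yface_below_triangulation_point:
  assumes d: "d \<in> Yface n p" and below: "\<forall>s\<in>segs n. d s \<le> triangulation_point n p T s"
  shows "d = triangulation_point n p T"
proof -
  define a where "a = amap n p d"
  define b where "b = area_vec n p T"
  have interior_ge: "b k \<le> a k" if "0 < k" "k < n - 1" for k
    using amap_antimono[of d "triangulation_point n p T" k] below that
    unfolding a_def b_def amap_triangulation_point by simp
  have "n - 1 < n" using three_le_n by simp
  then have "d {n - 1, Suc (n - 1) mod n} = 0" using d unfolding Yface_def by blast
  then have "d {0, n - 1} = 0" using three_le_n by (simp add: insert_commute)
  moreover have "triangulation_point n p T {0, n - 1} = 0"
    using triangulation_point_zero_on_T[OF hull_edge_last] .
  moreover have "0 < n - 1" using three_le_n by simp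
  ultimately have "coord_of_areas p a 0 (n - 1) = 0" "coord_of_areas p b 0 (n - 1) = 0"
    using fun_cong[OF Yface_eq_point_of_areas[OF d], of "{0, n - 1}"] \<open>n - 1 < n\<close>
    unfolding a_def b_def triangulation_point_def by (simp_all add: point_of_areas_pair)
  then have sum_zero: "(\<Sum>k\<in>{0<..<n - 1}. chord p 0 (n - 1) (p k) * (a k - b k)) = 0"
    using coord_of_areas_diff[of p b 0 "n - 1" a] by simp
  have chord_pos: "chord p 0 (n - 1) (p k) > 0" if "k \<in> {0<..<n - 1}" for k
    unfolding chord_def using det3_pos[of 0 k "n - 1"] that three_le_n unfolding cyclic_order_def
      by auto
  have "0 \<le> chord p 0 (n - 1) (p k) * (a k - b k)" if "k \<in> {0<..<n - 1}" for k
    using chord_pos[OF that] interior_ge[of k] that by simp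
  then have "\<forall>k\<in>{0<..<n - 1}. 0 \<le> chord p 0 (n - 1) (p k) * (a k - b k)" by blast
  then have terms_zero: "\<forall>k\<in>{0<..<n - 1}. chord p 0 (n - 1) (p k) * (a k - b k) = 0"
    using sum_nonneg_eq_0_iff[of "{0<..<n - 1}" "\<lambda>k. chord p 0 (n - 1) (p k) * (a k - b k)"]
      sum_zero
    by blast
  have "a k = b k" if "0 < k" "k < n - 1" for k
  proof -
    have "k \<in> {0<..<n - 1}" using that by simp
    then show ?thesis using chord_pos terms_zero by fastforce
  qed
  then have "point_of_areas n p a = point_of_areas n p b" by (rule point_of_areas_cong)
  then show ?thesis
    using Yface_eq_point_of_areas[OF d] unfolding a_def b_def triangulation_point_def by simp
qed

text \<open>Moving from \<open>d\<close> away from \<open>d'\<close> until a further coordinate vanishes stays in the face,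
  since the zero coordinates of \<open>d\<close> are zero for \<open>d'\<close> as well; \<open>d\<close> is then a convex combination of
  the new point and \<open>d'\<close>.\<close>

lemma (in convex_polygon) Yface_step_away:
  assumes d: "d \<in> Yface n p" and d': "d' \<in> Yface n p"
    and zeros: "\<forall>s\<in>segs n. d s = 0 \<longrightarrow> d' s = 0"
    and s0: "s0 \<in> segs n" "d' s0 < d s0"
  obtains e t where "e \<in> Yface n p" "0 \<le> t" "t \<le> 1" "d = (\<lambda>s. t * e s + (1 - t) * d' s)"
    "card {s \<in> segs n. e s \<noteq> 0} < card {s \<in> segs n. d s \<noteq> 0}"
proof -
  have d_nonpos: "\<forall>s\<in>segs n. d s \<le> 0" using d unfolding Yface_def Yset_iff by blast
  define E where "E = {s \<in> segs n. d' s < d s}"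
  have "finite E" "s0 \<in> E" using s0 finite_segs unfolding E_def by auto
  have d_neg: "d s < 0" if "s \<in> E" for s
    using that zeros d_nonpos unfolding E_def by force
  define r where "r s = - d s / (d s - d' s)" for s
  have r_pos: "r s > 0" if "s \<in> E" for s
    using d_neg[OF that] that unfolding r_def E_def by (simp add: divide_neg_pos)
  obtain s1 where s1: "s1 \<in> E" "\<forall>s\<in>E. r s1 \<le> r s"
    using finite_obtain_min[OF \<open>finite E\<close> \<open>s0 \<in> E\<close>, of r] by blast
  define \<tau> where "\<tau> = r s1"
  have "\<tau> > 0" unfolding \<tau>_def using r_pos s1(1) .
  define e where "e s = (1 + \<tau>) * d s + (1 - (1 + \<tau>)) * d' s" for s
  have e_eq: "e s = d s + \<tau> * (d s - d' s)" for s unfolding e_def by (simp add: algebra_simps)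
  have "e s \<le> 0" if "s \<in> segs n" for s
  proof (cases "s \<in> E")
    case True
    then have "\<tau> * (d s - d' s) \<le> r s * (d s - d' s)"
      using s1(2) unfolding \<tau>_def E_def by (simp add: mult_right_mono)
    also have "\<dots> = - d s" using True unfolding r_def E_def by simp
    finally show ?thesis unfolding e_eq by simp
  next
    case False
    then have "\<tau> * (d s - d' s) \<le> 0" using that \<open>\<tau> > 0\<close> unfolding E_def
      by (simp add: mult_nonneg_nonpos)
    moreover have "d s \<le> 0" using d_nonpos that by blast
    ultimately show ?thesis unfolding e_eq by simp
  qed
  then have "e \<in> Yface n p" unfolding e_def by (intro Yface_lincomb d d') (simp add: e_def)
  have "{s \<in> segs n. e s \<noteq> 0} \<subset> {s \<in> segs n. d s \<noteq> 0}"
  proof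
    show "{s \<in> segs n. e s \<noteq> 0} \<subseteq> {s \<in> segs n. d s \<noteq> 0}" using zeros unfolding e_eq by auto
    have "e s1 = 0" using s1(1) unfolding e_eq \<tau>_def r_def E_def by simp
    moreover have "s1 \<in> segs n" "d s1 \<noteq> 0" using d_neg[OF s1(1)] s1(1) unfolding E_def by auto
    ultimately show "{s \<in> segs n. e s \<noteq> 0} \<noteq> {s \<in> segs n. d s \<noteq> 0}" by blast
  qed
  then have fewer: "card {s \<in> segs n. e s \<noteq> 0} < card {s \<in> segs n. d s \<noteq> 0}"
    by (simp add: psubset_card_mono finite_segs)
  define t where "t = 1 / (1 + \<tau>)"
  have "t * (1 + \<tau>) = 1" "0 \<le> t" "t \<le> 1" using \<open>\<tau> > 0\<close> unfolding t_def by simp_all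
  have "d = (\<lambda>s. t * e s + (1 - t) * d' s)"
  proof
    fix s
    have "t * e s + (1 - t) * d' s = t * (1 + \<tau>) * d s + (1 - t * (1 + \<tau>)) * d' s"
      unfolding e_def by (simp add: algebra_simps)
    then show "d s = t * e s + (1 - t) * d' s" using \<open>t * (1 + \<tau>) = 1\<close> by simp
  qed
  from that[OF \<open>e \<in> Yface n p\<close> \<open>0 \<le> t\<close> \<open>t \<le> 1\<close> this fewer] show ?thesis .
qed

context convex_polygon
begin

lemma area_vec_in_secondary_polytope:
  "convex_triangulation n T \<Longrightarrow> area_vec n p T \<in> secondary_polytope n p"
  unfolding secondary_polytope_def by (rule subset_cvx_comb_hull[THEN subsetD]) blast

lemma amap_Yface_subset: "d \<in> Yface n p \<Longrightarrow> amap n p d \<in> secondary_polytope n p"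
proof (induction "card {s \<in> segs n. d s \<noteq> 0}" arbitrary: d rule: less_induct)
  case less
  have "d \<in> Yset n p" and hull: "\<forall>i<n. d {i, Suc i mod n} = 0"
    using less.prems unfolding Yface_def by auto
  define Z where "Z = {s \<in> segs n. d s = 0}"
  have "Z \<subseteq> segs n" unfolding Z_def by blast
  moreover have "\<forall>s\<in>Z. \<forall>t\<in>Z. noncrossing s t"
    unfolding Z_def using Yset_zeros_noncrossing[OF \<open>d \<in> Yset n p\<close>] by blast
  moreover have "\<forall>i<n. {i, Suc i mod n} \<in> Z"
  proof (intro allI impI)
    fix i assume "i < n"
    then have "i \<noteq> Suc i mod n" using three_le_n by (simp add: mod_Suc)
    then show "{i, Suc i mod n} \<in> Z" unfolding Z_def using hull \<open>i < n\<close> by (simp add: segs_iff)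
  qed
  ultimately obtain T where T: "convex_triangulation n T" "Z \<subseteq> T"
    by (rule noncrossing_extends_to_triangulation)
  interpret triangulated_polygon n p T by unfold_locales (rule T(1))
  have zeros: "\<forall>s\<in>segs n. d s = 0 \<longrightarrow> triangulation_point n p T s = 0"
    using T(2) triangulation_point_zero_on_T unfolding Z_def by blast
  show ?case
  proof (cases "\<forall>s\<in>segs n. d s \<le> triangulation_point n p T s")
    case True
    then have "amap n p d = area_vec n p T"
      using Yface_below_triangulation_point[OF less.prems] amap_triangulation_point by simp
    then show ?thesis using area_vec_in_secondary_polytope[OF T(1)] by simp
  next
    case False
    then obtain s0 where "s0 \<in> segs n" "triangulation_point n p T s0 < d s0" by (auto simp: not_le)
    then obtain e t where e: "e \<in> Yface n p" "0 \<le> t" "t \<le> 1"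
      "d = (\<lambda>s. t * e s + (1 - t) * triangulation_point n p T s)"
      "card {s \<in> segs n. e s \<noteq> 0} < card {s \<in> segs n. d s \<noteq> 0}"
      by (rule Yface_step_away[OF less.prems triangulation_point_in_Yface zeros])
    have "amap n p d = (\<lambda>i. t * amap n p e i + (1 - t) * area_vec n p T i)"
      unfolding e(4) amap_lincomb amap_triangulation_point ..
    moreover have "amap n p e \<in> secondary_polytope n p" using less.hyps[OF e(5) e(1)] .
    ultimately show ?thesis
      using cvx_comb_hull_closed[unfolded cvx_closed_def, rule_format, OF _
          area_vec_in_secondary_polytope[OF T(1), unfolded secondary_polytope_def] e(2,3)]
      unfolding secondary_polytope_def by simp
  qed
qed

lemma cvx_closed_amap_Yface: "cvx_closed (amap n p ` Yface n p)"
  unfolding cvx_closed_def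
proof (intro ballI allI impI)
  fix x y and t :: real
  assume "x \<in> amap n p ` Yface n p" "y \<in> amap n p ` Yface n p" "0 \<le> t" "t \<le> 1"
  then obtain d d' where d: "d \<in> Yface n p" "d' \<in> Yface n p" "x = amap n p d" "y = amap n p d'"
    by blast
  have "t * d s + (1 - t) * d' s \<le> 0" if "s \<in> segs n" for s
  proof -
    have "d s \<le> 0" "d' s \<le> 0" using d(1,2) that unfolding Yface_def Yset_iff by auto
    then show ?thesis using \<open>0 \<le> t\<close> \<open>t \<le> 1\<close> by (simp add: add_nonpos_nonpos mult_nonneg_nonpos)
  qed
  then have "(\<lambda>s. t * d s + (1 - t) * d' s) \<in> Yface n p" using Yface_lincomb d(1,2) by blast
  with amap_lincomb show "(\<lambda>j. t * x j + (1 - t) * y j) \<in> amap n p ` Yface n p"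
    unfolding d(3,4) by (rule image_eqI[OF sym])
qed

lemma secondary_polytope_subset: "secondary_polytope n p \<subseteq> amap n p ` Yface n p"
  unfolding secondary_polytope_def
proof (rule cvx_comb_hull_subset[OF cvx_closed_amap_Yface], clarify)
  fix T assume "convex_triangulation n T"
  then interpret triangulated_polygon n p T by unfold_locales
  show "area_vec n p T \<in> amap n p ` Yface n p"
    using amap_triangulation_point[symmetric] triangulation_point_in_Yface by (rule image_eqI)
qed

end

theorem corollary5p5:
  fixes n :: nat and p :: "nat \<Rightarrow> real \<times> real"
  assumes "convex_ccw n p"
  shows "(\<forall>T d. convex_triangulation n T \<and> d \<in> Yset n p \<and> (\<forall>e\<in>T. d e = 0)
              \<longrightarrow> amap n p d = area_vec n p T)
       \<and> amap n p ` Yface n p = secondary_polytope n p"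
proof
  interpret convex_polygon n p by unfold_locales (rule assms)
  show "\<forall>T d. convex_triangulation n T \<and> d \<in> Yset n p \<and> (\<forall>e\<in>T. d e = 0)
      \<longrightarrow> amap n p d = area_vec n p T"
  proof (intro allI impI, elim conjE)
    fix T d assume "convex_triangulation n T" "d \<in> Yset n p" "\<forall>e\<in>T. d e = 0"
    then interpret triangulated_polygon n p T by unfold_locales
    show "amap n p d = area_vec n p T"
      using amap_eq_area_vec \<open>d \<in> Yset n p\<close> \<open>\<forall>e\<in>T. d e = 0\<close> by blast
  qed
  show "amap n p ` Yface n p = secondary_polytope n p"
    using amap_Yface_subset secondary_polytope_subset by blast
qed

end
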